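(* Assume $h^\ell_\eta=\hbar$ for all $\ell=1,\dots,m$. Then for every $r\in\mathcal O$ one has $\pi_r\mathcal D=\mathcal D$ and $\pi_rI_{\mathcal D}=I_{\mathcal D}$.
   Context: Let $R$ be an irreducible reduced root system of rank $n$ in $V=\mathbb C^n$, standard bilinear form $(\cdot,\cdot)$, $\beta^\vee=2\beta/(\beta,\beta)$, Weyl group $W$, positive roots $R_+$, simple roots $\Delta=\{\alpha_1,\dots,\alpha_n\}$, maximal root $\theta=\sum_i n_i\alpha_i$, coroot lattice $Q^\vee$, fundamental coweights $b_i$ ($(\alpha_i,b_j)=\delta_{ij}$). Fix $\hbar\in\mathbb C\setminus\pi i\mathbb Q$, $\hbar\ne0$. For $\lambda\in V$, $\tau(\lambda)$ is the translation $x\mapsto x+\hbar\lambda$. Let $\mathcal O=\{0\}\cup\{r:n_r=1\}$; $\pi_0=1$ and for $r\ne0$, $\pi_r=\tau(b_r)u_r^{-1}$, where $u_r\in W$ is the element preserving $\{-\theta,\alpha_1,\dots,\alpha_n\}$ with $u_r(\alpha_r)=-\theta$. $\pi_r$ acts on the space $\mathcal F$ of smooth $2\pi iQ^\vee$-periodic functions on $V$ by $(\pi_rf)(x)=f(\pi_r^{-1}x)$. Let $\eta:R\to\mathbb C$ be $W$-invariant, $H_\eta(S)=\{x:(\alpha,x)=\eta_\alpha\ \forall\alpha\in S\}$; fix $S_0\subset\Delta$, $W_+=\{w\in W: wS_0\subset R_+\}$, $\mathcal D_0=H_\eta(S_0)$, $\mathcal D=\bigcup_{w\in W_+}w\mathcal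 D_0$, $I_{\mathcal D}=\{f\in\mathcal F:f|_{\mathcal D}=0\}$. Let $R_0=\mathrm{span}(S_0)\cap R=\bigsqcup_{\ell=1}^mR_\ell$ be the decomposition into irreducible components, $S_\ell=S_0\cap R_\ell=\{\alpha^\ell_1,\dots,\alpha^\ell_{k_\ell}\}$, $\theta_\ell=\sum_j n^\ell_j\alpha^\ell_j$ the maximal root of $R_\ell$, and the generalized Coxeter number $h^\ell_\eta=\eta_{\theta_\ell}+\sum_{j=1}^{k_\ell}n^\ell_j\eta_{\alpha^\ell_j}$. *)

theory Defs
  imports "HOL-Analysis.Analysis"
begin

text \<open>Standard (complex-bilinear, not Hermitian) form on V.\<close>
definition bil :: "complex^'n \<Rightarrow> complex^'n \<Rightarrow> complex" where
  "bil x y = (\<Sum>i\<in>UNIV. x$i * y$i)"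

definition coroot :: "complex^'n \<Rightarrow> complex^'n" where
  "coroot \<beta> = (2 / bil \<beta> \<beta>) *s \<beta>"

definition reflect :: "complex^'n \<Rightarrow> complex^'n \<Rightarrow> complex^'n" where
  "reflect \<alpha> x = x - bil (coroot \<alpha>) x *s \<alpha>"

text \<open>A (crystallographic) root system spanning V; roots are real vectors
  (a real root system complexified).\<close>
definition root_system :: "(complex^'n) set \<Rightarrow> bool" where
  "root_system R \<longleftrightarrow> finite R \<and> 0 \<notin> R
     \<and> (\<forall>\<beta>\<in>R. \<forall>i. Im (\<beta>$i) = 0)
     \<and> (\<forall>x. \<exists>c. x = (\<Sum>\<beta>\<in>R. c \<beta> *s \<beta>))
     \<and> (\<forall>\<alpha>\<in>R. \<forall>\<beta>\<in>R. reflect \<alpha> \<beta> \<in> R)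
     \<and> (\<forall>\<alpha>\<in>R. \<forall>\<beta>\<in>R. bil (coroot \<alpha>) \<beta> \<in> \<int>)"

definition reduced_rs :: "(complex^'n) set \<Rightarrow> bool" where
  "reduced_rs R \<longleftrightarrow> (\<forall>\<alpha>\<in>R. \<forall>c. c *s \<alpha> \<in> R \<longrightarrow> c = 1 \<or> c = -1)"

definition irreducible_rs :: "(complex^'n) set \<Rightarrow> bool" where
  "irreducible_rs R \<longleftrightarrow> \<not> (\<exists>A B. A \<union> B = R \<and> A \<inter> B = {} \<and> A \<noteq> {} \<and> B \<noteq> {}
                               \<and> (\<forall>a\<in>A. \<forall>b\<in>B. bil a b = 0))"

inductive_set weyl_group :: "(complex^'n) set \<Rightarrow> (complex^'n \<Rightarrow> complex^'n) set"
  for R :: "(complex^'n) set" where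
  weyl_id: "id \<in> weyl_group R"
| weyl_step: "w \<in> weyl_group R \<Longrightarrow> \<alpha> \<in> R \<Longrightarrow> reflect \<alpha> \<circ> w \<in> weyl_group R"

definition nonneg_comb :: "(complex^'n) set \<Rightarrow> complex^'n \<Rightarrow> bool" where
  "nonneg_comb S v \<longleftrightarrow> (\<exists>k :: complex^'n \<Rightarrow> nat. v = (\<Sum>\<gamma>\<in>S. of_nat (k \<gamma>) *s \<gamma>))"

definition is_base :: "(complex^'n) set \<Rightarrow> ('n \<Rightarrow> complex^'n) \<Rightarrow> bool" where
  "is_base R \<alpha> \<longleftrightarrow> inj \<alpha> \<and> range \<alpha> \<subseteq> R
     \<and> (\<forall>c. (\<Sum>i\<in>UNIV. c i *s \<alpha> i) = 0 \<longrightarrow> (\<forall>i. c i = 0))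
     \<and> (\<forall>\<beta>\<in>R. nonneg_comb (range \<alpha>) \<beta> \<or> nonneg_comb (range \<alpha>) (- \<beta>))"

definition pos_roots :: "(complex^'n) set \<Rightarrow> ('n \<Rightarrow> complex^'n) \<Rightarrow> (complex^'n) set" where
  "pos_roots R \<alpha> = {\<beta>\<in>R. nonneg_comb (range \<alpha>) \<beta>}"

definition is_max_root :: "(complex^'n) set \<Rightarrow> (complex^'n) set \<Rightarrow> complex^'n \<Rightarrow> bool" where
  "is_max_root C S \<theta> \<longleftrightarrow> \<theta> \<in> C \<and> (\<forall>\<beta>\<in>C. nonneg_comb S (\<theta> - \<beta>))"

definition coroot_lattice :: "(complex^'n) set \<Rightarrow> (complex^'n) set" where
  "coroot_lattice R = {(\<Sum>\<beta>\<in>R. of_int (k \<beta>) *s coroot \<beta>) | k. True}"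

definition R0 :: "(complex^'n) set \<Rightarrow> (complex^'n) set \<Rightarrow> (complex^'n) set" where
  "R0 R S0 = {\<beta>\<in>R. \<exists>c. \<beta> = (\<Sum>\<gamma>\<in>S0. c \<gamma> *s \<gamma>)}"

definition rs_components :: "(complex^'n) set \<Rightarrow> (complex^'n) set set" where
  "rs_components Rz =
     {{\<beta>\<in>Rz. (\<alpha>, \<beta>) \<in> {(x, y). x \<in> Rz \<and> y \<in> Rz \<and> bil x y \<noteq> 0}\<^sup>*} | \<alpha>. \<alpha> \<in> Rz}"

text \<open>Generalized Coxeter number condition h^l_eta = hbar for every component R_l
  (with S_l = S_0 \<inter> R_l, theta_l = sum_j n^l_j alpha^l_j the maximal root of R_l).\<close>
definition coxeter_condition ::
  "(complex^'n) set \<Rightarrow> (complex^'n) set \<Rightarrow> (complex^'n \<Rightarrow> complex) \<Rightarrow> complex \<Rightarrow> bool" where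
  "coxeter_condition R S0 \<eta> hbar \<longleftrightarrow>
     (\<forall>C\<in>rs_components (R0 R S0). \<forall>\<theta>c c.
        is_max_root C (S0 \<inter> C) \<theta>c \<and> \<theta>c = (\<Sum>\<gamma>\<in>S0 \<inter> C. c \<gamma> *s \<gamma>)
        \<longrightarrow> \<eta> \<theta>c + (\<Sum>\<gamma>\<in>S0 \<inter> C. c \<gamma> * \<eta> \<gamma>) = hbar)"

definition Hyp :: "(complex^'n \<Rightarrow> complex) \<Rightarrow> (complex^'n) set \<Rightarrow> (complex^'n) set" where
  "Hyp \<eta> S = {x. \<forall>\<alpha>\<in>S. bil \<alpha> x = \<eta> \<alpha>}"

definition Wplus :: "(complex^'n) set \<Rightarrow> ('n \<Rightarrow> complex^'n) \<Rightarrow> (complex^'n) set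
                      \<Rightarrow> (complex^'n \<Rightarrow> complex^'n) set" where
  "Wplus R \<alpha> S0 = {w \<in> weyl_group R. w ` S0 \<subseteq> pos_roots R \<alpha>}"

definition Dset :: "(complex^'n) set \<Rightarrow> ('n \<Rightarrow> complex^'n) \<Rightarrow> (complex^'n \<Rightarrow> complex)
                     \<Rightarrow> (complex^'n) set \<Rightarrow> (complex^'n) set" where
  "Dset R \<alpha> \<eta> S0 = (\<Union>w\<in>Wplus R \<alpha> S0. w ` Hyp \<eta> S0)"

text \<open>C^k in the real sense (V viewed as a real vector space): C^0 = continuous,
  C^(k+1) = differentiable with all directional derivatives C^k.\<close>
fun Ck :: "nat \<Rightarrow> ('a::real_normed_vector \<Rightarrow> 'b::real_normed_vector) \<Rightarrow> bool" where
  "Ck 0 f \<longleftrightarrow> continuous_on UNIV f"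
| "Ck (Suc k) f \<longleftrightarrow> (\<forall>x. f differentiable (at x))
                    \<and> (\<forall>v. Ck k (\<lambda>x. frechet_derivative f (at x) v))"

definition smooth_fun :: "('a::real_normed_vector \<Rightarrow> 'b::real_normed_vector) \<Rightarrow> bool" where
  "smooth_fun f \<longleftrightarrow> (\<forall>k. Ck k f)"

definition Fspace :: "(complex^'n) set \<Rightarrow> (complex^'n \<Rightarrow> complex) set" where
  "Fspace R = {f. smooth_fun f \<and>
     (\<forall>x. \<forall>l\<in>coroot_lattice R. f (x + (2 * of_real pi * \<i>) *s l) = f x)}"

definition ideal_D :: "(complex^'n) set \<Rightarrow> (complex^'n) set \<Rightarrow> (complex^'n \<Rightarrow> complex) set" where
  "ideal_D R D = {f \<in> Fspace R. \<forall>x\<in>D. f x = 0}"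

text \<open>r ranges over 'n option: None stands for r = 0, Some s for the index s.
  pi_0 = 1 and pi_s = tau(b_s) u_s^(-1), i.e. x |-> u_s^(-1) x + hbar b_s.\<close>
definition pi_map :: "('n \<Rightarrow> (complex^'n \<Rightarrow> complex^'n)) \<Rightarrow> ('n \<Rightarrow> complex^'n) \<Rightarrow> complex
                       \<Rightarrow> 'n option \<Rightarrow> complex^'n \<Rightarrow> complex^'n" where
  "pi_map u b hbar r = (case r of None \<Rightarrow> id | Some s \<Rightarrow> (\<lambda>x. inv (u s) x + hbar *s b s))"

definition pi_fun :: "('n \<Rightarrow> (complex^'n \<Rightarrow> complex^'n)) \<Rightarrow> ('n \<Rightarrow> complex^'n) \<Rightarrow> complex
                       \<Rightarrow> 'n option \<Rightarrow> (complex^'n \<Rightarrow> complex) \<Rightarrow> (complex^'n \<Rightarrow> complex)" where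
  "pi_fun u b hbar r f = f \<circ> inv (pi_map u b hbar r)"

definition minusc_set :: "('n \<Rightarrow> nat) \<Rightarrow> 'n option set" where
  "minusc_set n = insert None (Some ` {r. n r = 1})"

end

theory Submission
  imports Defs
begin

(*
  For n_s = 1, pi_s is x |-> u_s^-1 x + hbar b_s, and
  u_s acts on the extended simple roots {-theta, alpha_1, ..., alpha_n} as a diagram
  automorphism.  The heart of the proof is affine_map_preserves_D: a map y |-> g y + hbar t,
  where g keeps positive the roots with k-th coordinate 0 (k minuscule) and sends those with
  k-th coordinate 1 to negative roots pairing to -1 with t, maps D into D.  To see this for a
  point w x of D, the simple roots of S0 hit by the k-th coordinate are moved, component by
  component of R_0, by a Weyl group element of that component onto a second base of it which
  contains minus its highest root rho; the shift by hbar is then exactly compensated because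
  rho pairs to hbar - eta_rho with H_eta(S0), which is the hypothesis h_eta = hbar.
*)

lemma bil_sym: "bil x y = bil y x"
  unfolding bil_def by (simp add: mult.commute)
lemma bil_add_left: "bil (x + y) z = bil x z + bil y z"
  unfolding bil_def by (simp add: distrib_right sum.distrib)
lemma bil_add_right: "bil z (x + y) = bil z x + bil z y"
  unfolding bil_def by (simp add: distrib_left sum.distrib)
lemma bil_scale_left: "bil (c *s x) z = c * bil x z"
  unfolding bil_def by (simp add: sum_distrib_left mult.assoc)
lemma bil_scale_right: "bil z (c *s x) = c * bil z x"
  unfolding bil_def by (simp add: sum_distrib_left algebra_simps)
lemma bil_minus_left: "bil (- x) z = - bil x z"
  unfolding bil_def by (simp add: sum_negf)
lemma bil_minus_right: "bil z (- x) = - bil z x"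
  unfolding bil_def by (simp add: sum_negf)
lemma bil_diff_left: "bil (x - y) z = bil x z - bil y z"
  unfolding bil_def by (simp add: left_diff_distrib sum_subtractf)
lemma bil_diff_right: "bil z (x - y) = bil z x - bil z y"
  unfolding bil_def by (simp add: right_diff_distrib sum_subtractf)
lemma bil_zero_left[simp]: "bil 0 z = 0" unfolding bil_def by simp
lemma bil_zero_right[simp]: "bil z 0 = 0" unfolding bil_def by simp
lemma bil_sum_left: "bil (\<Sum>i\<in>A. f i) z = (\<Sum>i\<in>A. bil (f i) z)"
  by (induction A rule: infinite_finite_induct) (auto simp: bil_add_left)
lemma bil_sum_right: "bil z (\<Sum>i\<in>A. f i) = (\<Sum>i\<in>A. bil z (f i))"
  by (induction A rule: infinite_finite_induct) (auto simp: bil_add_right)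

definition real_vec :: "complex^'n \<Rightarrow> bool" where
  "real_vec x \<longleftrightarrow> (\<forall>i. Im (x$i) = 0)"

lemma bil_real: assumes "real_vec x" "real_vec y" shows "bil x y = of_real (\<Sum>i\<in>UNIV. Re (x$i) * Re (y$i))"
proof -
  have "x$i * y$i = of_real (Re (x$i) * Re (y$i))" for i
    using assms unfolding real_vec_def by (simp add: complex_eq_iff)
  then show ?thesis unfolding bil_def by simp
qed

lemma bil_self_pos: assumes "real_vec x" "x \<noteq> 0"
  shows "Re (bil x x) > 0" "Im (bil x x) = 0" "bil x x \<noteq> 0"
proof -
  obtain j where j: "x$j \<noteq> 0" using assms(2) by (metis vec_eq_iff zero_index)
  have rj: "Re (x$j) \<noteq> 0" using j assms(1) unfolding real_vec_def by (simp add: complex_eq_iff)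
  have "(\<Sum>i\<in>UNIV. Re (x$i) * Re (x$i)) \<ge> Re (x$j) * Re (x$j)"
    by (rule member_le_sum) auto
  moreover have "Re (x$j) * Re (x$j) > 0" using rj by (auto simp: zero_less_mult_iff linorder_neq_iff)
  ultimately have p: "(\<Sum>i\<in>UNIV. Re (x$i) * Re (x$i)) > 0" by linarith
  show "Re (bil x x) > 0" "Im (bil x x) = 0" using p bil_real[OF assms(1) assms(1)] by auto
  then show "bil x x \<noteq> 0" by auto
qed

lemma reflect_bil: "bil (coroot a) x = 2 * bil a x / bil a a"
  unfolding coroot_def by (simp add: bil_scale_left)

lemma reflect_add: "reflect a (x + y) = reflect a x + reflect a y"
  unfolding reflect_def by (simp add: bil_add_right vector_sadd_rdistrib algebra_simps)
lemma reflect_scale: "reflect a (c *s x) = c *s reflect a x"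
  unfolding reflect_def by (simp add: bil_scale_right vector_ssub_ldistrib vector_smult_assoc)
lemma reflect_minus: "reflect a (- x) = - reflect a x"
  by (metis reflect_scale vector_sneg_minus1)
lemma reflect_diff: "reflect a (x - y) = reflect a x - reflect a y"
  by (metis diff_conv_add_uminus reflect_add reflect_minus)
lemma reflect_self: "bil a a \<noteq> 0 \<Longrightarrow> reflect a a = - a"
proof -
  assume h: "bil a a \<noteq> 0"
  have "reflect a a = a - 2 *s a" unfolding reflect_def reflect_bil using h by simp
  also have "\<dots> = - a" by (simp add: vec_eq_iff)
  finally show ?thesis .
qed
lemma reflect_orth: "bil a x = 0 \<Longrightarrow> reflect a x = x"
  unfolding reflect_def reflect_bil by simp
lemma reflect_bil_a: "bil a a \<noteq> 0 \<Longrightarrow> bil a (reflect a x) = - bil a x"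
  unfolding reflect_def reflect_bil by (simp add: bil_diff_right bil_scale_right)
lemma reflect_bil_pres: assumes h: "bil a a \<noteq> 0" shows "bil (reflect a x) (reflect a y) = bil x y"
proof -
  define c where "c = 2 * bil a x / bil a a"
  have "bil (reflect a x) (reflect a y) = bil x (reflect a y) - c * bil a (reflect a y)"
    unfolding reflect_def[of a x] reflect_bil c_def by (simp add: bil_diff_left bil_scale_left)
  also have "\<dots> = bil x y"
    unfolding reflect_bil_a[OF h] unfolding reflect_def reflect_bil c_def
    by (simp add: bil_diff_right bil_scale_right bil_sym[of a x])
  finally show ?thesis .
qed
lemma reflect_invol: assumes h: "bil a a \<noteq> 0" shows "reflect a (reflect a x) = x"
proof -
  have "reflect a (reflect a x) = reflect a (x - bil (coroot a) x *s a)"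
    by (simp add: reflect_def[of a x])
  also have "\<dots> = reflect a x - bil (coroot a) x *s reflect a a"
    by (simp add: reflect_diff reflect_scale)
  also have "\<dots> = (x - bil (coroot a) x *s a) + bil (coroot a) x *s a"
    using h by (simp add: reflect_self vector_smult_rneg reflect_def[of a x])
  also have "\<dots> = x" by simp
  finally show ?thesis .
qed

definition nondeg :: "(complex^'n) set \<Rightarrow> bool" where
  "nondeg C \<longleftrightarrow> (\<forall>c\<in>C. bil c c \<noteq> 0)"

lemma weyl_add: "w \<in> weyl_group C \<Longrightarrow> w (x + y) = w x + w y"
  by (induction w arbitrary: x y rule: weyl_group.induct) (auto simp: reflect_add)
lemma weyl_scale: "w \<in> weyl_group C \<Longrightarrow> w (c *s x) = c *s w x"
  by (induction w arbitrary: x rule: weyl_group.induct) (auto simp: reflect_scale)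
lemma weyl_minus: "w \<in> weyl_group C \<Longrightarrow> w (- x) = - w x"
  by (metis weyl_scale vector_sneg_minus1)
lemma weyl_diff: "w \<in> weyl_group C \<Longrightarrow> w (x - y) = w x - w y"
  by (metis diff_conv_add_uminus weyl_add weyl_minus)
lemma weyl_zero: "w \<in> weyl_group C \<Longrightarrow> w 0 = 0"
  by (metis weyl_scale vector_smult_lzero)
lemma weyl_sum: "w \<in> weyl_group C \<Longrightarrow> w (\<Sum>i\<in>A. f i) = (\<Sum>i\<in>A. w (f i))"
  by (induction A rule: infinite_finite_induct) (auto simp: weyl_add weyl_zero)
lemma weyl_bil: "w \<in> weyl_group C \<Longrightarrow> nondeg C \<Longrightarrow> bil (w x) (w y) = bil x y"
  by (induction w arbitrary: x y rule: weyl_group.induct) (auto simp: reflect_bil_pres nondeg_def)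
lemma weyl_comp: "w1 \<in> weyl_group C \<Longrightarrow> w2 \<in> weyl_group C \<Longrightarrow> w1 \<circ> w2 \<in> weyl_group C"
  by (induction w1 rule: weyl_group.induct) (auto simp: comp_assoc intro: weyl_group.intros)
lemma reflect_weyl: "a \<in> C \<Longrightarrow> reflect a \<in> weyl_group C"
  using weyl_group.weyl_step[OF weyl_group.weyl_id, of a C] by simp
lemma weyl_inverse: "w \<in> weyl_group C \<Longrightarrow> nondeg C \<Longrightarrow>
    \<exists>w'\<in>weyl_group C. w' \<circ> w = id \<and> w \<circ> w' = id"
proof (induction w rule: weyl_group.induct)
  case weyl_id then show ?case using weyl_group.weyl_id[of C] by (intro bexI[of _ id]) auto
next
  case (weyl_step w a)
  obtain w' where w': "w' \<in> weyl_group C" "w' \<circ> w = id" "w \<circ> w' = id"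
    using weyl_step.IH[OF weyl_step.prems] by blast
  have aa: "bil a a \<noteq> 0" using weyl_step nondeg_def by auto
  have "w' \<circ> reflect a \<in> weyl_group C" using weyl_comp[OF w'(1) reflect_weyl[OF weyl_step(2)]] .
  moreover have "(w' \<circ> reflect a) \<circ> (reflect a \<circ> w) = id"
    using w' reflect_invol[OF aa] by (simp add: fun_eq_iff comp_def; metis comp_apply id_apply)
  moreover have "(reflect a \<circ> w) \<circ> (w' \<circ> reflect a) = id"
    using w' reflect_invol[OF aa] by (simp add: fun_eq_iff comp_def; metis comp_apply id_apply)
  ultimately show ?case by blast
qed
lemma weyl_bij: "nondeg C \<Longrightarrow> w \<in> weyl_group C \<Longrightarrow> bij w"
  using weyl_inverse[of w C] by (metis o_bij)
lemma weyl_inv_in: "nondeg C \<Longrightarrow> w \<in> weyl_group C \<Longrightarrow> inv w \<in> weyl_group C"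
proof -
  assume a: "nondeg C" "w \<in> weyl_group C"
  then obtain w' where w': "w' \<in> weyl_group C" "w' \<circ> w = id" "w \<circ> w' = id" using weyl_inverse[of w C] by blast
  then have "inv w = w'" by (metis inv_unique_comp)
  then show ?thesis using w' by simp
qed
lemma weyl_inv_l: "nondeg C \<Longrightarrow> w \<in> weyl_group C \<Longrightarrow> inv w (w x) = x"
  using weyl_bij by (metis bij_inv_eq_iff)
lemma weyl_inv_r: "nondeg C \<Longrightarrow> w \<in> weyl_group C \<Longrightarrow> w (inv w x) = x"
  using weyl_bij by (metis bij_inv_eq_iff)
lemma weyl_mono: "w \<in> weyl_group C \<Longrightarrow> C \<subseteq> C' \<Longrightarrow> w \<in> weyl_group C'"
  by (induction w rule: weyl_group.induct) (auto intro: weyl_group.intros)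
lemma weyl_fix: "w \<in> weyl_group C \<Longrightarrow> (\<forall>c\<in>C. bil c x = 0) \<Longrightarrow> w x = x"
  by (induction w rule: weyl_group.induct) (auto simp: reflect_orth)
lemma weyl_pres: "w \<in> weyl_group C \<Longrightarrow> (\<forall>a\<in>C. \<forall>c\<in>C. reflect a c \<in> C) \<Longrightarrow> x \<in> C \<Longrightarrow> w x \<in> C"
  by (induction w rule: weyl_group.induct) auto

definition re_vec :: "complex^'n \<Rightarrow> real^'n" where
  "re_vec x = (\<chi> i. Re (x$i))"

lemma bil_re_vec: "real_vec x \<Longrightarrow> real_vec y \<Longrightarrow> bil x y = of_real (inner (re_vec x) (re_vec y))"
  unfolding bil_real inner_vec_def re_vec_def by simp

lemma real_vec_diff: "real_vec x \<Longrightarrow> real_vec y \<Longrightarrow> real_vec (x - y)" unfolding real_vec_def by simp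

lemma bil_cauchy_schwarz: assumes "real_vec x" "real_vec y"
  shows "(Re (bil x y))\<^sup>2 \<le> Re (bil x x) * Re (bil y y)"
  using Cauchy_Schwarz_ineq[of "re_vec x" "re_vec y"] bil_re_vec[OF assms] bil_re_vec[OF assms(1) assms(1)]
     bil_re_vec[OF assms(2) assms(2)] by simp

lemma Nats_neg_zero: assumes "(c::complex) \<in> \<nat>" "- c \<in> \<nat>" shows "c = 0"
proof -
  obtain m where m: "c = of_nat m" using assms(1) by (metis Nats_cases)
  obtain m' where m': "- c = of_nat m'" using assms(2) by (metis Nats_cases)
  have "of_nat m + of_nat m' = (0::complex)" by (simp add: m'[symmetric] m[symmetric])
  then have "of_nat (m + m') = (0::complex)" by simp
  then have "m = 0" by (metis add_is_0 of_nat_eq_0_iff)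
  then show ?thesis using m by simp
qed

lemma Nats_one_pm: assumes "(1::complex) - c \<in> \<nat>" "1 + c \<in> \<nat>"
  shows "c = -1 \<or> c = 0 \<or> c = 1"
proof -
  obtain a where a: "1 - c = of_nat a" using assms(1) by (metis Nats_cases)
  obtain b where b: "1 + c = of_nat b" using assms(2) by (metis Nats_cases)
  have "(of_nat a + of_nat b :: complex) = 2" unfolding a[symmetric] b[symmetric] by simp
  then have "(of_nat (a + b) :: complex) = of_nat 2" by simp
  then have "a + b = 2" by (simp only: of_nat_eq_iff)
  then have "a = 0 \<or> a = 1 \<or> a = 2" by auto
  moreover have "c = 1 - of_nat a" using a by (simp add: algebra_simps)
  ultimately show ?thesis by auto
qed

lemma int_product_le_4:
  fixes k1 k2 :: int assumes "k1 \<ge> 1" "k2 \<ge> 1" "k1 * k2 \<le> 4"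
  shows "k1 = 1 \<or> k2 = 1 \<or> (k1 = 2 \<and> k2 = 2)"
proof -
  consider "k1 = 1" | "k2 = 1" | "k1 \<ge> 2" "k2 \<ge> 2" using assms by linarith
  then show ?thesis
  proof cases
    case 3
    then have "k1 * 2 \<le> k1 * k2" "2 * k2 \<le> k1 * k2" by (simp_all add: mult_left_mono mult_right_mono)
    then show ?thesis using 3 assms(3) by linarith
  qed simp_all
qed

lemma Ck_affine: assumes L: "bounded_linear L"
  shows "Ck k f \<Longrightarrow> Ck k (\<lambda>x. f (L x + c))"
proof (induction k arbitrary: f)
  case 0
  have "continuous_on UNIV (\<lambda>x. L x + c)"
    by (intro continuous_intros bounded_linear.continuous_on[OF L])
  moreover have "continuous_on UNIV f" using 0 by simp
  ultimately show ?case by (simp add: continuous_on_compose2[of UNIV f UNIV "\<lambda>x. L x + c"])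
next
  case (Suc k)
  have df: "\<And>x. f differentiable (at x)" and dk: "\<And>v. Ck k (\<lambda>x. frechet_derivative f (at x) v)"
    using Suc.prems by auto
  have dA: "((\<lambda>x. L x + c) has_derivative L) (at x)" for x
    using bounded_linear.has_derivative[OF L has_derivative_ident] by (auto intro!: derivative_eq_intros)
  have hd: "((\<lambda>x. f (L x + c)) has_derivative (\<lambda>v. frechet_derivative f (at (L x + c)) (L v))) (at x)" for x
    using has_derivative_compose[OF dA, of f] df frechet_derivative_works by blast
  have fd: "frechet_derivative (\<lambda>x. f (L x + c)) (at x) = (\<lambda>v. frechet_derivative f (at (L x + c)) (L v))" for x
    using frechet_derivative_at[OF hd] by simp
  have "(\<lambda>x. f (L x + c)) differentiable (at x)" for x using hd differentiableI by blast
  moreover have "Ck k (\<lambda>x. frechet_derivative (\<lambda>x. f (L x + c)) (at x) v)" for v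
    unfolding fd using Suc.IH[OF dk[of "L v"]] by simp
  ultimately show ?case by simp
qed

lemma smooth_affine: "bounded_linear L \<Longrightarrow> smooth_fun f \<Longrightarrow> smooth_fun (\<lambda>x. f (L x + c))"
  unfolding smooth_fun_def using Ck_affine by blast

lemma scaleR_vec_complex: "(r::real) *\<^sub>R (x :: complex^'n) = (complex_of_real r) *s x"
unfolding vec_eq_iff proof
  fix i show "(r *\<^sub>R x) $ i = (complex_of_real r *s x) $ i"
    unfolding vector_scaleR_component vector_smult_component by (rule scaleR_conv_of_real)
qed

lemma weyl_bounded_linear: "w \<in> weyl_group C \<Longrightarrow> bounded_linear w"
proof -
  assume w: "w \<in> weyl_group C"
  have "linear w"
    by (rule linearI) (simp_all add: weyl_add[OF w] scaleR_vec_complex weyl_scale[OF w])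
  then show ?thesis using linear_conv_bounded_linear by blast
qed

locale based_root_system =
  fixes R :: "(complex^'n) set" and \<alpha> :: "'n \<Rightarrow> complex^'n" and b :: "'n \<Rightarrow> complex^'n"
  assumes rs: "root_system R" and red: "reduced_rs R" and base: "is_base R \<alpha>"
    and cow: "\<forall>i j. bil (\<alpha> i) (b j) = (if i = j then 1 else 0)"
begin

lemma finR: "finite R" and zero_notin: "0 \<notin> R" and realR: "\<beta> \<in> R \<Longrightarrow> real_vec \<beta>"
  and reflR: "a \<in> R \<Longrightarrow> c \<in> R \<Longrightarrow> reflect a c \<in> R"
  and intR: "a \<in> R \<Longrightarrow> c \<in> R \<Longrightarrow> bil (coroot a) c \<in> \<int>"
  using rs unfolding root_system_def real_vec_def by auto

lemma nondegR: "nondeg R"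
  unfolding nondeg_def using bil_self_pos(3) realR zero_notin by metis

lemma bilRR: "\<beta> \<in> R \<Longrightarrow> bil \<beta> \<beta> \<noteq> 0" using nondegR nondeg_def by auto

lemma minusR: "\<beta> \<in> R \<Longrightarrow> - \<beta> \<in> R"
  using reflR[of \<beta> \<beta>] reflect_self[OF bilRR] by simp

lemma inj_alpha: "inj \<alpha>" and alphaR: "\<alpha> i \<in> R"
  and root_sign: "\<beta> \<in> R \<Longrightarrow> nonneg_comb (range \<alpha>) \<beta> \<or> nonneg_comb (range \<alpha>) (- \<beta>)"
  using base unfolding is_base_def by auto

definition coef :: "'n \<Rightarrow> complex^'n \<Rightarrow> complex" where
  "coef i x = bil x (b i)"

lemma coef_add: "coef i (x + y) = coef i x + coef i y" unfolding coef_def by (simp add: bil_add_left)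
lemma coef_diff: "coef i (x - y) = coef i x - coef i y" unfolding coef_def by (simp add: bil_diff_left)
lemma coef_minus: "coef i (- x) = - coef i x" unfolding coef_def by (simp add: bil_minus_left)
lemma coef_scale: "coef i (c *s x) = c * coef i x" unfolding coef_def by (simp add: bil_scale_left)
lemma coef_sum: "coef i (\<Sum>j\<in>A. f j) = (\<Sum>j\<in>A. coef i (f j))" unfolding coef_def by (simp add: bil_sum_left)
lemma coef_zero[simp]: "coef i 0 = 0" unfolding coef_def by simp
lemma coef_alpha: "coef i (\<alpha> j) = (if j = i then 1 else 0)" unfolding coef_def using cow by simp

lemma coef_comb: "coef j (\<Sum>i\<in>UNIV. c i *s \<alpha> i) = c j"
proof -
  have "(\<Sum>i\<in>UNIV. c i * (if i = j then 1 else 0)) = (\<Sum>i\<in>UNIV. if i = j then c i else 0)"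
    by (rule sum.cong) auto
  then show ?thesis by (simp add: coef_sum coef_scale coef_alpha)
qed

lemma sum_range_alpha: "(\<Sum>\<gamma>\<in>range \<alpha>. f \<gamma>) = (\<Sum>i\<in>UNIV. f (\<alpha> i))"
  using sum.reindex[OF inj_alpha, of f] by simp

text \<open>Every vector is the combination of the simple roots with its coordinates as
  coefficients: this holds for every root (an integer combination of the base) and the roots
  span V.\<close>
definition expands :: "complex^'n \<Rightarrow> bool" where
  "expands x \<longleftrightarrow> x = (\<Sum>i\<in>UNIV. coef i x *s \<alpha> i)"

lemma expands_comb: "expands (\<Sum>i\<in>UNIV. c i *s \<alpha> i)"
  unfolding expands_def coef_comb ..

lemma expands_root: assumes "\<beta> \<in> R" shows "expands \<beta>"
proof -
  from root_sign[OF assms] obtain k where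
    "\<beta> = (\<Sum>\<gamma>\<in>range \<alpha>. of_nat (k \<gamma>) *s \<gamma>) \<or> - \<beta> = (\<Sum>\<gamma>\<in>range \<alpha>. of_nat (k \<gamma>) *s \<gamma>)"
    unfolding nonneg_comb_def by blast
  then show ?thesis
  proof
    assume "\<beta> = (\<Sum>\<gamma>\<in>range \<alpha>. of_nat (k \<gamma>) *s \<gamma>)"
    then have "\<beta> = (\<Sum>i\<in>UNIV. of_nat (k (\<alpha> i)) *s \<alpha> i)" unfolding sum_range_alpha .
    then show ?thesis using expands_comb by simp
  next
    assume "- \<beta> = (\<Sum>\<gamma>\<in>range \<alpha>. of_nat (k \<gamma>) *s \<gamma>)"
    then have "- \<beta> = (\<Sum>i\<in>UNIV. of_nat (k (\<alpha> i)) *s \<alpha> i)" unfolding sum_range_alpha .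
    then have "\<beta> = (\<Sum>i\<in>UNIV. (- of_nat (k (\<alpha> i))) *s \<alpha> i)"
      by (simp add: vector_smult_lneg sum_negf) (metis minus_minus)
    then show ?thesis using expands_comb[of "\<lambda>i. - of_nat (k (\<alpha> i))"] by (simp add: vector_smult_lneg)
  qed
qed

lemma expands_add: "expands x \<Longrightarrow> expands y \<Longrightarrow> expands (x + y)"
  unfolding expands_def by (simp add: coef_add vector_sadd_rdistrib sum.distrib)
lemma expands_scale: assumes "expands x" shows "expands (c *s x)"
proof -
  have "c *s x = c *s (\<Sum>i\<in>UNIV. coef i x *s \<alpha> i)" using assms unfolding expands_def by simp
  also have "\<dots> = (\<Sum>i\<in>UNIV. (c * coef i x) *s \<alpha> i)"
    by (simp add: scalar_mult_eq_scaleR[symmetric] vector_smult_assoc sum_distrib_left vec_eq_iff sum_component mult.assoc)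
  finally show ?thesis using expands_comb by metis
qed
lemma expands_sum: "(\<And>j. j \<in> A \<Longrightarrow> expands (f j)) \<Longrightarrow> expands (\<Sum>j\<in>A. f j)"
proof (induction A rule: infinite_finite_induct)
  case (infinite A) then show ?case using expands_comb[of "\<lambda>_. 0"] by simp
next
  case empty then show ?case using expands_comb[of "\<lambda>_. 0"] by simp
next
  case (insert x F) then show ?case by (simp add: expands_add)
qed

lemma coef_expansion: "x = (\<Sum>i\<in>UNIV. coef i x *s \<alpha> i)"
proof -
  obtain c where x: "x = (\<Sum>\<beta>\<in>R. c \<beta> *s \<beta>)" using rs unfolding root_system_def by blast
  have "expands x" unfolding x by (rule expands_sum) (rule expands_scale, rule expands_root, simp)
  then show ?thesis unfolding expands_def .
qed

lemma vec_eq_coef: "x = y \<longleftrightarrow> (\<forall>i. coef i x = coef i y)"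
proof
  assume "\<forall>i. coef i x = coef i y"
  then have "(\<Sum>i\<in>UNIV. coef i x *s \<alpha> i) = (\<Sum>i\<in>UNIV. coef i y *s \<alpha> i)" by simp
  then show "x = y" using coef_expansion[of x] coef_expansion[of y] by simp
qed simp

lemma coef_nonzero: "x \<noteq> 0 \<Longrightarrow> \<exists>i. coef i x \<noteq> 0"
  using vec_eq_coef[of x 0] by auto

definition pos :: "complex^'n \<Rightarrow> bool" where
  "pos x \<longleftrightarrow> (\<forall>i. coef i x \<in> \<nat>)"

definition supp :: "(complex^'n) set \<Rightarrow> complex^'n \<Rightarrow> bool" where
  "supp S x \<longleftrightarrow> (\<forall>i. \<alpha> i \<notin> S \<longrightarrow> coef i x = 0)"

lemma comb_sub: assumes "S \<subseteq> range \<alpha>"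
  shows "(\<Sum>\<gamma>\<in>S. f \<gamma> *s \<gamma>) = (\<Sum>i\<in>UNIV. (if \<alpha> i \<in> S then f (\<alpha> i) else 0) *s \<alpha> i)"
proof -
  have S: "S = \<alpha> ` {i. \<alpha> i \<in> S}" using assms by auto
  have "(\<Sum>\<gamma>\<in>S. f \<gamma> *s \<gamma>) = (\<Sum>i\<in>{i. \<alpha> i \<in> S}. f (\<alpha> i) *s \<alpha> i)"
    by (subst S, subst sum.reindex) (auto intro: inj_on_subset[OF inj_alpha])
  also have "\<dots> = (\<Sum>i\<in>UNIV. (if \<alpha> i \<in> S then f (\<alpha> i) else 0) *s \<alpha> i)"
    by (rule sum.mono_neutral_cong_left) auto
  finally show ?thesis .
qed

lemma nonneg_comb_iff: assumes "S \<subseteq> range \<alpha>"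
  shows "nonneg_comb S x \<longleftrightarrow> pos x \<and> supp S x"
proof
  assume "nonneg_comb S x"
  then obtain k where x: "x = (\<Sum>\<gamma>\<in>S. of_nat (k \<gamma>) *s \<gamma>)" unfolding nonneg_comb_def by blast
  have c: "coef i x = (if \<alpha> i \<in> S then of_nat (k (\<alpha> i)) else 0)" for i
    unfolding x comb_sub[OF assms] coef_comb ..
  show "pos x \<and> supp S x" unfolding pos_def supp_def c by auto
next
  assume h: "pos x \<and> supp S x"
  define k where "k \<gamma> = nat \<lfloor>Re (coef (inv \<alpha> \<gamma>) x)\<rfloor>" for \<gamma>
  have kk: "of_nat (k (\<alpha> i)) = coef i x" for i
  proof -
    have "inv \<alpha> (\<alpha> i) = i" using inj_alpha by simp
    moreover obtain m where "coef i x = of_nat m" using h unfolding pos_def by (metis Nats_cases)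
    ultimately show ?thesis unfolding k_def by simp
  qed
  have "x = (\<Sum>i\<in>UNIV. coef i x *s \<alpha> i)" by (rule coef_expansion)
  also have "\<dots> = (\<Sum>i\<in>UNIV. (if \<alpha> i \<in> S then of_nat (k (\<alpha> i)) else 0) *s \<alpha> i)"
    using h kk unfolding supp_def by (intro sum.cong) auto
  also have "\<dots> = (\<Sum>\<gamma>\<in>S. of_nat (k \<gamma>) *s \<gamma>)" using comb_sub[OF assms] by simp
  finally show "nonneg_comb S x" unfolding nonneg_comb_def by blast
qed

lemma pos_nonneg: "nonneg_comb (range \<alpha>) x \<longleftrightarrow> pos x"
  using nonneg_comb_iff[of "range \<alpha>" x] unfolding supp_def by auto

lemma root_pos_neg: "\<beta> \<in> R \<Longrightarrow> pos \<beta> \<or> pos (- \<beta>)"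
  using root_sign pos_nonneg by blast

lemma pos_roots_eq: "pos_roots R \<alpha> = {\<beta>\<in>R. pos \<beta>}"
  unfolding pos_roots_def pos_nonneg ..

lemma pos_neg_zero: "pos x \<Longrightarrow> pos (- x) \<Longrightarrow> x = 0"
  unfolding pos_def coef_minus vec_eq_coef[of x 0] using Nats_neg_zero by simp

lemma root_not_both: "\<beta> \<in> R \<Longrightarrow> pos \<beta> \<Longrightarrow> \<not> pos (- \<beta>)"
  using pos_neg_zero zero_notin by blast

lemma pos_add: "pos x \<Longrightarrow> pos y \<Longrightarrow> pos (x + y)"
  unfolding pos_def coef_add using Nats_add by blast

lemma pos_alpha: "pos (\<alpha> i)" unfolding pos_def coef_alpha by auto

lemma pos_zero: "pos 0" unfolding pos_def by simp
lemma pos_sum: "(\<And>j. j \<in> A \<Longrightarrow> pos (f j)) \<Longrightarrow> pos (\<Sum>j\<in>A. f j)"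
  by (induction A rule: infinite_finite_induct) (auto simp: pos_zero pos_add)

lemma pos_scale_nat: "pos x \<Longrightarrow> c \<in> \<nat> \<Longrightarrow> pos (c *s x)"
  unfolding pos_def coef_scale using Nats_mult by blast

lemma weylR: "w \<in> weyl_group R \<Longrightarrow> \<beta> \<in> R \<Longrightarrow> w \<beta> \<in> R"
  using weyl_pres[of w R \<beta>] reflR by blast

lemma bil_root_real: "\<beta> \<in> R \<Longrightarrow> \<gamma> \<in> R \<Longrightarrow> bil \<beta> \<gamma> = of_real (Re (bil \<beta> \<gamma>))"
  using bil_re_vec[OF realR realR] by (metis Re_complex_of_real)

lemma root_self_pos: "\<beta> \<in> R \<Longrightarrow> Re (bil \<beta> \<beta>) > 0"
  using bil_self_pos(1)[OF realR] zero_notin by blast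

text \<open>For roots beta, gamma with positive pairing and gamma distinct from beta, one of the
  two Cartan integers is 1: they are positive, their product is at most 4 by
  Cauchy-Schwarz, and both equal to 2 would make beta - gamma isotropic.\<close>
lemma cartan_integer_one:
  assumes b: "\<beta> \<in> R" and g: "\<gamma> \<in> R" and ne: "\<gamma> \<noteq> \<beta>" and p: "Re (bil \<beta> \<gamma>) > 0"
  shows "bil (coroot \<gamma>) \<beta> = 1 \<or> bil (coroot \<beta>) \<gamma> = 1"
proof -
  define pp where "pp = Re (bil \<beta> \<gamma>)"
  define a where "a = Re (bil \<beta> \<beta>)"
  define c where "c = Re (bil \<gamma> \<gamma>)"
  have a0: "a > 0" "c > 0" using root_self_pos b g a_def c_def by auto
  have e1: "bil \<beta> \<gamma> = of_real pp" "bil \<gamma> \<beta> = of_real pp" "bil \<beta> \<beta> = of_real a" "bil \<gamma> \<gamma> = of_real c"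
    using bil_root_real[OF b g] bil_root_real[OF g b] bil_root_real[OF b b] bil_root_real[OF g g]
    unfolding pp_def a_def c_def bil_sym[of \<gamma> \<beta>] by auto
  obtain k1 where k1: "bil (coroot \<gamma>) \<beta> = of_int k1" using intR[OF g b] by (metis Ints_cases)
  obtain k2 where k2: "bil (coroot \<beta>) \<gamma> = of_int k2" using intR[OF b g] by (metis Ints_cases)
  have "of_int k1 = (of_real (2 * pp / c) :: complex)" using k1 unfolding reflect_bil e1 by simp
  then have r1: "real_of_int k1 = 2 * pp / c" by (metis of_real_eq_iff of_real_of_int_eq)
  have "of_int k2 = (of_real (2 * pp / a) :: complex)" using k2 unfolding reflect_bil e1 by simp
  then have r2: "real_of_int k2 = 2 * pp / a" by (metis of_real_eq_iff of_real_of_int_eq)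
  have "pp\<^sup>2 \<le> a * c" using bil_cauchy_schwarz[OF realR[OF b] realR[OF g]] pp_def a_def c_def by simp
  then have "real_of_int k1 * real_of_int k2 \<le> 4"
    unfolding r1 r2 using a0 by (simp add: field_simps power2_eq_square)
  then have prod: "k1 * k2 \<le> 4" by (metis of_int_le_iff of_int_mult of_int_numeral)
  have "real_of_int k1 > 0" "real_of_int k2 > 0" unfolding r1 r2 using p a0 pp_def by auto
  then have "k1 \<ge> 1" "k2 \<ge> 1" by auto
  moreover have "\<not> (k1 = 2 \<and> k2 = 2)"
  proof
    assume "k1 = 2 \<and> k2 = 2"
    then have "pp = c" "pp = a" using r1 r2 a0 by (auto simp: field_simps)
    then have "bil (\<beta> - \<gamma>) (\<beta> - \<gamma>) = 0" using e1 by (simp add: bil_diff_left bil_diff_right)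
    moreover have "\<beta> - \<gamma> \<noteq> 0" using ne by simp
    ultimately show False using bil_self_pos(3)[OF real_vec_diff[OF realR[OF b] realR[OF g]]] by blast
  qed
  ultimately show ?thesis using int_product_le_4[OF _ _ prod] k1 k2 by auto
qed

text \<open>If two roots beta, gamma, neither equal nor opposite, have positive pairing then
  beta - gamma is a root: it is s_gamma beta or -s_beta gamma.\<close>
lemma root_string: assumes b: "\<beta> \<in> R" and g: "\<gamma> \<in> R" and ne: "\<gamma> \<noteq> \<beta>" "\<gamma> \<noteq> - \<beta>"
  and p: "Re (bil \<beta> \<gamma>) > 0"
  shows "\<beta> - \<gamma> \<in> R"
  using cartan_integer_one[OF b g ne(1) p]
proof
  assume "bil (coroot \<gamma>) \<beta> = 1"
  then have "reflect \<gamma> \<beta> = \<beta> - \<gamma>" unfolding reflect_def by simp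
  then show ?thesis using reflR[OF g b] by simp
next
  assume "bil (coroot \<beta>) \<gamma> = 1"
  then have "reflect \<beta> \<gamma> = \<gamma> - \<beta>" unfolding reflect_def by simp
  then show ?thesis using minusR[OF reflR[OF b g]] by simp
qed

lemma reduced_mult: "\<beta> \<in> R \<Longrightarrow> c *s \<beta> \<in> R \<Longrightarrow> c = 1 \<or> c = -1"
  using red unfolding reduced_rs_def by blast

lemma pos_of_coef: assumes "\<beta> \<in> R" "coef j \<beta> \<in> \<nat>" "coef j \<beta> \<noteq> 0" shows "pos \<beta>"
proof (rule ccontr)
  assume "\<not> pos \<beta>"
  then have "pos (- \<beta>)" using root_pos_neg[OF assms(1)] by blast
  then have "- coef j \<beta> \<in> \<nat>" unfolding pos_def coef_minus by blast
  with assms(2,3) show False using Nats_neg_zero by blast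
qed

lemma neg_of_coef: assumes "\<beta> \<in> R" "- coef j \<beta> \<in> \<nat>" "coef j \<beta> \<noteq> 0" shows "pos (- \<beta>)"
  using pos_of_coef[OF minusR[OF assms(1)], of j] assms unfolding coef_minus by simp

lemma root_other_coef: assumes "\<beta> \<in> R" "\<beta> \<noteq> \<alpha> i" "\<beta> \<noteq> - \<alpha> i"
  shows "\<exists>j. j \<noteq> i \<and> coef j \<beta> \<noteq> 0"
proof (rule ccontr)
  assume "\<not> ?thesis"
  then have "\<beta> = coef i \<beta> *s \<alpha> i"
    unfolding vec_eq_coef[of \<beta>] by (auto simp: coef_scale coef_alpha)
  then have "coef i \<beta> = 1 \<or> coef i \<beta> = -1" using reduced_mult[OF alphaR[of i], of "coef i \<beta>"] assms(1) by simp
  then show False using assms \<open>\<beta> = _\<close> by (auto simp: vector_smult_lneg)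
qed

lemma simple_refl_pos: assumes "\<beta> \<in> R" "pos \<beta>" "\<beta> \<noteq> \<alpha> i"
  shows "pos (reflect (\<alpha> i) \<beta>)"
proof -
  have "\<beta> \<noteq> - \<alpha> i" using assms root_not_both[OF alphaR pos_alpha] by auto
  then obtain j where j: "j \<noteq> i" "coef j \<beta> \<noteq> 0" using root_other_coef assms by blast
  have "coef j (reflect (\<alpha> i) \<beta>) = coef j \<beta>" using j
    unfolding reflect_def by (simp add: coef_diff coef_scale coef_alpha)
  then show ?thesis using pos_of_coef[OF reflR[OF alphaR assms(1)], of j] assms(2) j
    unfolding pos_def by simp
qed

lemma simple_bil_nonpos: assumes "i \<noteq> j" shows "Re (bil (\<alpha> i) (\<alpha> j)) \<le> 0"
proof (rule ccontr)
  assume "\<not> ?thesis"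
  moreover have "\<alpha> j \<noteq> \<alpha> i" using inj_alpha assms by (metis injD)
  moreover have "\<alpha> j \<noteq> - \<alpha> i" using root_not_both[OF alphaR pos_alpha] pos_alpha by metis
  ultimately have "\<alpha> i - \<alpha> j \<in> R" using root_string[OF alphaR alphaR] by simp
  moreover have "coef i (\<alpha> i - \<alpha> j) = 1" "coef j (\<alpha> i - \<alpha> j) = -1"
    using assms by (auto simp: coef_diff coef_alpha)
  moreover have m1: "(-1::complex) \<notin> \<nat>" using Nats_neg_zero[of 1] by auto
  ultimately show False using root_pos_neg[of "\<alpha> i - \<alpha> j"] unfolding pos_def coef_minus
    by (metis minus_minus)
qed

definition nat_coef :: "'n \<Rightarrow> complex^'n \<Rightarrow> nat" where
  "nat_coef i x = nat \<lfloor>Re (coef i x)\<rfloor>"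

definition height :: "complex^'n \<Rightarrow> nat" where
  "height x = (\<Sum>i\<in>UNIV. nat_coef i x)"

lemma pos_coef: "pos x \<Longrightarrow> coef i x = of_nat (nat_coef i x)"
proof -
  assume "pos x"
  then obtain m where "coef i x = of_nat m" unfolding pos_def by (metis Nats_cases)
  then show ?thesis unfolding nat_coef_def by simp
qed

lemma Re_bil_pos_expansion: assumes "pos x"
  shows "Re (bil y x) = (\<Sum>m\<in>UNIV. real (nat_coef m x) * Re (bil y (\<alpha> m)))"
proof -
  have "bil y x = (\<Sum>m\<in>UNIV. coef m x * bil y (\<alpha> m))"
    by (subst coef_expansion[of x]) (simp add: bil_sum_right bil_scale_right)
  then show ?thesis using pos_coef[OF assms] by simp
qed

lemma supp_orth: assumes "supp A x" "\<forall>a\<in>A. bil a c = 0" shows "bil x c = 0"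
proof -
  have "bil x c = (\<Sum>i\<in>UNIV. coef i x * bil (\<alpha> i) c)"
    by (subst coef_expansion[of x]) (simp add: bil_sum_left bil_scale_left)
  also have "\<dots> = 0" using assms unfolding supp_def by (intro sum.neutral) auto
  finally show ?thesis .
qed

lemma supp_minus: "supp A (- x) \<longleftrightarrow> supp A x" unfolding supp_def coef_minus by simp

lemma supp_alpha: "supp A (\<alpha> i) \<longleftrightarrow> \<alpha> i \<in> A" unfolding supp_def coef_alpha by auto

lemma pos_minus_simple: assumes p: "pos \<beta>" and c: "coef i \<beta> \<noteq> 0" shows "pos (\<beta> - \<alpha> i)"
proof -
  have ni: "nat_coef i \<beta> \<ge> 1" using pos_coef[OF p, of i] c by (cases "nat_coef i \<beta>") auto
  have "coef j (\<beta> - \<alpha> i) \<in> \<nat>" for j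
  proof (cases "j = i")
    case True
    then have "coef j (\<beta> - \<alpha> i) = of_nat (nat_coef i \<beta> - 1)"
      using ni pos_coef[OF p, of i] by (simp add: coef_diff coef_alpha of_nat_diff)
    then show ?thesis by simp
  next
    case False then show ?thesis using p unfolding pos_def by (simp add: coef_diff coef_alpha)
  qed
  then show ?thesis unfolding pos_def by blast
qed

text \<open>A positive root beta that is not simple has a simple root alpha_i with beta - alpha_i
  again a positive root: some alpha_i pairs positively with beta.\<close>
lemma pos_decomp: assumes b: "\<beta> \<in> R" "pos \<beta>" "\<beta> \<notin> range \<alpha>"
  shows "\<exists>i. \<beta> - \<alpha> i \<in> R \<and> pos (\<beta> - \<alpha> i) \<and> coef i \<beta> \<noteq> 0"
proof -
  have "bil \<beta> \<beta> = (\<Sum>i\<in>UNIV. coef i \<beta> * bil (\<alpha> i) \<beta>)"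
    by (subst (1) coef_expansion[of \<beta>]) (simp add: bil_sum_left bil_scale_left)
  then have s1: "Re (bil \<beta> \<beta>) = (\<Sum>i\<in>UNIV. real (nat_coef i \<beta>) * Re (bil (\<alpha> i) \<beta>))"
    using pos_coef[OF b(2)] by simp
  have s2: "Re (bil \<beta> \<beta>) > 0" using root_self_pos b by simp
  obtain i where i: "real (nat_coef i \<beta>) * Re (bil (\<alpha> i) \<beta>) > 0"
  proof -
    have "\<not> (\<forall>i. real (nat_coef i \<beta>) * Re (bil (\<alpha> i) \<beta>) \<le> 0)"
    proof
      assume "\<forall>i. real (nat_coef i \<beta>) * Re (bil (\<alpha> i) \<beta>) \<le> 0"
      then have "(\<Sum>i\<in>UNIV. real (nat_coef i \<beta>) * Re (bil (\<alpha> i) \<beta>)) \<le> 0" by (intro sum_nonpos) auto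
      then show False using s1 s2 by linarith
    qed
    then show ?thesis using that by (auto simp: not_le)
  qed
  then have c: "nat_coef i \<beta> \<ge> 1" "Re (bil \<beta> (\<alpha> i)) > 0"
    by (auto simp: bil_sym zero_less_mult_iff)
  have ne: "\<alpha> i \<noteq> \<beta>" using b by auto
  have ne2: "\<alpha> i \<noteq> - \<beta>" using root_not_both[OF b(1) b(2)] pos_alpha by (metis)
  have r: "\<beta> - \<alpha> i \<in> R" using root_string[OF b(1) alphaR ne ne2 c(2)] .
  moreover have "coef i \<beta> \<noteq> 0" using c pos_coef[OF b(2), of i] by simp
  ultimately show ?thesis using r pos_minus_simple[OF b(2)] by blast
qed

lemma of_nat_eq_minus_one: "(of_nat m' :: complex) = of_nat m - 1 \<Longrightarrow> m = Suc m'"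
proof -
  assume "(of_nat m' :: complex) = of_nat m - 1"
  then have "(of_nat (Suc m') :: complex) = of_nat m" by (simp add: algebra_simps)
  then show ?thesis by (simp only: of_nat_eq_iff)
qed

lemma height_decr: assumes "pos \<beta>" "pos (\<beta> - \<alpha> i)" shows "height (\<beta> - \<alpha> i) < height \<beta>"
proof -
  have a: "nat_coef j (\<beta> - \<alpha> i) \<le> nat_coef j \<beta>" for j
  proof (cases "j = i")
    case True
    then have "(of_nat (nat_coef j (\<beta> - \<alpha> i)) :: complex) = of_nat (nat_coef j \<beta>) - 1"
      using pos_coef[OF assms(1), of j] pos_coef[OF assms(2), of j] by (simp add: coef_diff coef_alpha)
    then show ?thesis using of_nat_eq_minus_one by fastforce
  next
    case False
    then have "(of_nat (nat_coef j (\<beta> - \<alpha> i)) :: complex) = of_nat (nat_coef j \<beta>)"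
      using pos_coef[OF assms(1), of j] pos_coef[OF assms(2), of j] by (simp add: coef_diff coef_alpha)
    then show ?thesis by (simp only: of_nat_eq_iff)
  qed
  have "(of_nat (nat_coef i (\<beta> - \<alpha> i)) :: complex) = of_nat (nat_coef i \<beta>) - 1"
    using pos_coef[OF assms(1), of i] pos_coef[OF assms(2), of i] by (simp add: coef_diff coef_alpha)
  then have b: "nat_coef i (\<beta> - \<alpha> i) < nat_coef i \<beta>" using of_nat_eq_minus_one by fastforce
  show ?thesis unfolding height_def using a b by (intro sum_strict_mono_ex1) auto
qed

lemma split_step: assumes orth: "\<forall>a\<in>X. \<forall>c\<in>Y. bil a c = 0" and disj: "X \<inter> Y = {}"
  and b': "\<beta>' \<in> R" "supp X \<beta>'" "pos \<beta>'" and i: "\<alpha> i \<in> Y" and bb: "\<beta>' + \<alpha> i \<in> R"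
  shows False
proof -
  have o1: "bil \<beta>' (\<alpha> i) = 0" using supp_orth[OF b'(2)] orth i by blast
  have ai: "bil (\<alpha> i) (\<alpha> i) \<noteq> 0" using bilRR alphaR by blast
  have "bil (coroot (\<alpha> i)) (\<beta>' + \<alpha> i) = 2"
    unfolding reflect_bil using o1 ai by (simp add: bil_add_right bil_sym[of "\<alpha> i" \<beta>'])
  then have "reflect (\<alpha> i) (\<beta>' + \<alpha> i) = \<beta>' - \<alpha> i"
    unfolding reflect_def by (simp add: vec_eq_iff)
  then have r: "\<beta>' - \<alpha> i \<in> R" using reflR[OF alphaR[of i] bb] by simp
  obtain j where j: "coef j \<beta>' \<noteq> 0" using coef_nonzero zero_notin b'(1) by metis
  have "\<alpha> j \<in> X" using j b'(2) unfolding supp_def by blast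
  then have ji: "j \<noteq> i" using i disj by auto
  have ci: "coef i \<beta>' = 0" using b'(2) i disj unfolding supp_def by auto
  have cj: "coef j (\<beta>' - \<alpha> i) = coef j \<beta>'" "coef i (\<beta>' - \<alpha> i) = -1"
    using ji ci by (auto simp: coef_diff coef_alpha)
  have m1: "(-1::complex) \<notin> \<nat>" using Nats_neg_zero[of 1] by auto
  consider "pos (\<beta>' - \<alpha> i)" | "pos (- (\<beta>' - \<alpha> i))" using root_pos_neg[OF r] by blast
  then show False
  proof cases
    case 1 then show False using cj m1 unfolding pos_def by metis
  next
    case 2
    then have "- coef j \<beta>' \<in> \<nat>" using cj unfolding pos_def coef_minus by metis
    moreover have "coef j \<beta>' \<in> \<nat>" using b'(3) unfolding pos_def by blast
    ultimately show False using Nats_neg_zero j by blast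
  qed
qed

lemma supp_shift: assumes "supp X \<beta>'" "\<alpha> i \<in> X" shows "supp X (\<beta>' + \<alpha> i)"
  using assms unfolding supp_def by (auto simp: coef_add coef_alpha)

lemma supp_add_simple:
  assumes AB: "A \<inter> B = {}" and orth: "\<forall>a\<in>A. \<forall>c\<in>B. bil a c = 0"
    and b': "\<beta>' \<in> R" "supp A \<beta>'" "pos \<beta>'" and ai: "\<alpha> i \<in> A \<union> B" and bb: "\<beta>' + \<alpha> i \<in> R"
  shows "supp A (\<beta>' + \<alpha> i)"
proof (cases "\<alpha> i \<in> A")
  case True then show ?thesis using supp_shift[OF b'(2)] by blast
next
  case False then show ?thesis using split_step[OF orth AB b'] ai bb by blast
qed

lemma split_pos: assumes AB: "A \<inter> B = {}" and orth: "\<forall>a\<in>A. \<forall>c\<in>B. bil a c = 0"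
  shows "\<beta> \<in> R \<Longrightarrow> pos \<beta> \<Longrightarrow> supp (A \<union> B) \<beta> \<Longrightarrow> supp A \<beta> \<or> supp B \<beta>"
proof (induction "height \<beta>" arbitrary: \<beta> rule: less_induct)
  case less
  show ?case
  proof (cases "\<beta> \<in> range \<alpha>")
    case True
    then obtain i where i: "\<beta> = \<alpha> i" by blast
    then have "\<alpha> i \<in> A \<union> B" using less.prems(3) unfolding supp_def by (force simp: coef_alpha)
    then show ?thesis using i supp_alpha by auto
  next
    case False
    obtain i where i: "\<beta> - \<alpha> i \<in> R" "pos (\<beta> - \<alpha> i)" "coef i \<beta> \<noteq> 0"
      using pos_decomp[OF less.prems(1,2) False] by blast
    have ai: "\<alpha> i \<in> A \<union> B" using i(3) less.prems(3) unfolding supp_def by blast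
    have s': "supp (A \<union> B) (\<beta> - \<alpha> i)" using less.prems(3) ai unfolding supp_def
      by (auto simp: coef_diff coef_alpha)
    have "supp A (\<beta> - \<alpha> i) \<or> supp B (\<beta> - \<alpha> i)"
      using less.hyps[OF height_decr[OF less.prems(2) i(2)] i(1) i(2) s'] .
    moreover have bb: "(\<beta> - \<alpha> i) + \<alpha> i \<in> R" using less.prems(1) by simp
    moreover have orth': "\<forall>a\<in>B. \<forall>c\<in>A. bil a c = 0" using orth bil_sym by metis
    moreover have "\<alpha> i \<in> B \<union> A" using ai by blast
    ultimately show ?thesis
      using supp_add_simple[OF AB orth i(1) _ i(2) ai bb] AB
        supp_add_simple[of B A "\<beta> - \<alpha> i" i] i(1,2) by auto
  qed
qed

lemma split_root: assumes AB: "A \<inter> B = {}" and orth: "\<forall>a\<in>A. \<forall>c\<in>B. bil a c = 0"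
  and b: "\<beta> \<in> R" "supp (A \<union> B) \<beta>" shows "supp A \<beta> \<or> supp B \<beta>"
proof -
  consider "pos \<beta>" | "pos (- \<beta>)" using root_pos_neg[OF b(1)] by blast
  then show ?thesis
  proof cases
    case 1 then show ?thesis using split_pos[OF AB orth b(1) _ b(2)] by blast
  next
    case 2 then show ?thesis using split_pos[OF AB orth minusR[OF b(1)] _] b(2) supp_minus by metis
  qed
qed

end

locale parabolic_subsystem = based_root_system R \<alpha> b for R :: "(complex^'n) set" and \<alpha> b +
  fixes S0 :: "(complex^'n) set"
  assumes S0_sub: "S0 \<subseteq> range \<alpha>"
begin

lemma S0R: "S0 \<subseteq> R" using S0_sub alphaR by blast

lemma R0_iff: "\<beta> \<in> R0 R S0 \<longleftrightarrow> \<beta> \<in> R \<and> supp S0 \<beta>"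
proof
  assume "\<beta> \<in> R0 R S0"
  then obtain c where b: "\<beta> \<in> R" "\<beta> = (\<Sum>\<gamma>\<in>S0. c \<gamma> *s \<gamma>)" unfolding R0_def by blast
  have "coef i \<beta> = (if \<alpha> i \<in> S0 then c (\<alpha> i) else 0)" for i
    unfolding b(2) comb_sub[OF S0_sub] coef_comb ..
  then show "\<beta> \<in> R \<and> supp S0 \<beta>" using b unfolding supp_def by auto
next
  assume h: "\<beta> \<in> R \<and> supp S0 \<beta>"
  have "\<beta> = (\<Sum>i\<in>UNIV. coef i \<beta> *s \<alpha> i)" by (rule coef_expansion)
  also have "\<dots> = (\<Sum>i\<in>UNIV. (if \<alpha> i \<in> S0 then coef (inv \<alpha> (\<alpha> i)) \<beta> else 0) *s \<alpha> i)"
    using h inj_alpha unfolding supp_def by (intro sum.cong) auto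
  also have "\<dots> = (\<Sum>\<gamma>\<in>S0. coef (inv \<alpha> \<gamma>) \<beta> *s \<gamma>)" using comb_sub[OF S0_sub] by simp
  finally have eq: "\<beta> = (\<Sum>\<gamma>\<in>S0. coef (inv \<alpha> \<gamma>) \<beta> *s \<gamma>)" .
  show "\<beta> \<in> R0 R S0" using h eq unfolding R0_def
    by (intro CollectI conjI exI[of _ "\<lambda>\<gamma>. coef (inv \<alpha> \<gamma>) \<beta>"]) auto
qed

abbreviation Rpar :: "(complex^'n) set" where "Rpar \<equiv> R0 R S0"
definition nonorth :: "((complex^'n) \<times> (complex^'n)) set" where
  "nonorth = {(x, y). x \<in> Rpar \<and> y \<in> Rpar \<and> bil x y \<noteq> 0}"

lemma rs_components_nonorth: "rs_components Rpar = {{\<beta>\<in>Rpar. (a, \<beta>) \<in> nonorth\<^sup>*} | a. a \<in> Rpar}"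
  unfolding rs_components_def nonorth_def ..

lemma nonorth_sym: "(x, y) \<in> nonorth \<Longrightarrow> (y, x) \<in> nonorth" unfolding nonorth_def by simp (metis bil_sym)

lemma nonorth_rtrancl_sym: "(x, y) \<in> nonorth\<^sup>* \<Longrightarrow> (y, x) \<in> nonorth\<^sup>*"
proof (induction rule: rtrancl_induct)
  case base then show ?case by simp
next
  case (step y z) then show ?case using nonorth_sym by (meson converse_rtrancl_into_rtrancl)
qed

lemma S0_supp: "\<gamma> \<in> S0 \<Longrightarrow> supp S0 \<gamma>"
  using S0_sub supp_alpha by blast

lemma S0_Rpar: "\<gamma> \<in> S0 \<Longrightarrow> \<gamma> \<in> Rpar"
  using R0_iff S0R S0_supp by blast

lemma root_has_simple: assumes "\<beta> \<in> R" "supp S \<beta>" "S \<subseteq> range \<alpha>"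
  shows "\<exists>a\<in>S. bil \<beta> a \<noteq> 0"
proof (rule ccontr)
  assume "\<not> ?thesis"
  then have "\<forall>a\<in>S. bil a \<beta> = 0" using bil_sym by metis
  then have "bil \<beta> \<beta> = 0" using supp_orth[OF assms(2)] by blast
  then show False using bilRR assms(1) by blast
qed

context
  fixes C assumes C: "C \<in> rs_components Rpar"
begin

definition SC :: "(complex^'n) set" where "SC = S0 \<inter> C"

lemma C_obtain: obtains a where "a \<in> Rpar" "C = {\<beta>\<in>Rpar. (a, \<beta>) \<in> nonorth\<^sup>*}"
  using C unfolding rs_components_nonorth by blast

lemma C_sub: "C \<subseteq> Rpar" using C_obtain by blast

lemma C_nonempty: "C \<noteq> {}" using C_obtain by blast

lemma C_closed: assumes "\<beta> \<in> C" "\<gamma> \<in> Rpar" "bil \<beta> \<gamma> \<noteq> 0" shows "\<gamma> \<in> C"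
proof -
  obtain a where a: "a \<in> Rpar" "C = {\<beta>\<in>Rpar. (a, \<beta>) \<in> nonorth\<^sup>*}" using C_obtain by blast
  have "(\<beta>, \<gamma>) \<in> nonorth" using assms C_sub unfolding nonorth_def by auto
  then show ?thesis using assms a by (auto intro: rtrancl_into_rtrancl)
qed

lemma SC_sub: "SC \<subseteq> range \<alpha>" "SC \<subseteq> S0" "SC \<subseteq> C" unfolding SC_def using S0_sub by auto

lemma SC_orth: "\<forall>a\<in>SC. \<forall>c\<in>S0 - SC. bil a c = 0"
  using C_closed S0_Rpar unfolding SC_def by blast

lemma C_supp: assumes "\<beta> \<in> C" shows "supp SC \<beta>"
proof -
  have b: "\<beta> \<in> R" "supp S0 \<beta>" using assms C_sub R0_iff by auto
  have "S0 = SC \<union> (S0 - SC)" using SC_sub by blast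
  then have "supp SC \<beta> \<or> supp (S0 - SC) \<beta>"
    using split_root[OF _ SC_orth b(1)] b(2) by (metis Diff_disjoint)
  moreover have "\<not> supp (S0 - SC) \<beta>"
  proof
    assume s: "supp (S0 - SC) \<beta>"
    obtain a where a: "a \<in> S0" "bil \<beta> a \<noteq> 0" using root_has_simple[OF b S0_sub] by blast
    then have "a \<in> C" using C_closed[OF assms S0_Rpar] by blast
    then have "a \<in> SC" using a unfolding SC_def by blast
    moreover have "\<forall>x\<in>S0 - SC. bil x a = 0" using SC_orth bil_sym \<open>a \<in> SC\<close> by metis
    ultimately show False using supp_orth[OF s] a(2) by blast
  qed
  ultimately show ?thesis by blast
qed

lemma C_iff: "\<beta> \<in> C \<longleftrightarrow> \<beta> \<in> R \<and> supp SC \<beta>"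
proof
  assume "\<beta> \<in> C" then show "\<beta> \<in> R \<and> supp SC \<beta>" using C_supp C_sub R0_iff by blast
next
  assume h: "\<beta> \<in> R \<and> supp SC \<beta>"
  then have s0: "supp S0 \<beta>" using SC_sub unfolding supp_def by blast
  obtain a where a: "a \<in> SC" "bil \<beta> a \<noteq> 0" using root_has_simple[OF _ _ SC_sub(1)] h by blast
  have "a \<in> C" using a SC_sub by blast
  have "bil a \<beta> \<noteq> 0" using a bil_sym by metis
  then show "\<beta> \<in> C" using C_closed[OF \<open>a \<in> C\<close>] h s0 R0_iff by blast
qed

lemma C_minus: "\<beta> \<in> C \<Longrightarrow> - \<beta> \<in> C" using C_iff minusR supp_minus by blast

lemma component_sides:
  assumes A: "A \<subseteq> SC" and orth: "\<forall>a\<in>A. \<forall>c\<in>SC - A. bil a c = 0" and b: "\<beta> \<in> C"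
  shows "supp A \<beta> \<or> supp (SC - A) \<beta>"
proof -
  have "A \<union> (SC - A) = SC" using A by blast
  then have "\<beta> \<in> R" "supp (A \<union> (SC - A)) \<beta>" using C_iff b by auto
  then show ?thesis using split_root[OF _ orth] by blast
qed

lemma supp_orth_sets:
  assumes "supp A y" "supp B z" "\<forall>a\<in>A. \<forall>c\<in>B. bil a c = 0"
  shows "bil y z = 0"
proof -
  have "\<forall>c\<in>B. bil y c = 0" using supp_orth[OF assms(1)] assms(3) by blast
  then show ?thesis using supp_orth[OF assms(2)] bil_sym by metis
qed

text \<open>The simple roots of a component cannot be split into two nonempty mutually orthogonal
  parts: the side on which a root is supported is constant along chains of non-orthogonal
  roots, and C is one such equivalence class.\<close>
lemma component_connected: assumes A: "A \<subseteq> SC" "A \<noteq> {}" and orth: "\<forall>a\<in>A. \<forall>c\<in>SC - A. bil a c = 0"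
  shows "A = SC"
proof (rule ccontr)
  assume ne: "A \<noteq> SC"
  have orth': "\<forall>c\<in>SC - A. \<forall>a\<in>A. bil c a = 0" using orth bil_sym by metis
  have side_step: "supp A y \<longleftrightarrow> supp A z" if "y \<in> C" "z \<in> C" "bil y z \<noteq> 0" for y z
    using component_sides[OF A(1) orth] supp_orth_sets[of A y "SC - A" z] orth
      supp_orth_sets[of "SC - A" y A z] orth' that by blast
  obtain a0 where a0: "a0 \<in> Rpar" "C = {\<beta>\<in>Rpar. (a0, \<beta>) \<in> nonorth\<^sup>*}" using C_obtain by blast
  have inv: "supp A \<beta> \<longleftrightarrow> supp A a0" if "(a0, \<beta>) \<in> nonorth\<^sup>*" for \<beta>
    using that
  proof (induction rule: rtrancl_induct)
    case (step y z)
    have "y \<in> C" "z \<in> C" using step a0 unfolding nonorth_def by (auto intro: rtrancl_into_rtrancl)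
    moreover have "bil y z \<noteq> 0" using step(2) unfolding nonorth_def by auto
    ultimately show ?case using step.IH side_step by blast
  qed simp
  obtain a c where a: "a \<in> A" and c: "c \<in> SC - A" using A ne by blast
  have aC: "a \<in> C" "c \<in> C" using a c A SC_sub by auto
  have "supp A a" using a A SC_sub supp_alpha by blast
  moreover have "\<not> supp A c"
  proof
    assume "supp A c"
    moreover have "supp (SC - A) c" using c SC_sub supp_alpha by blast
    ultimately have "\<forall>i. coef i c = 0" unfolding supp_def by blast
    then have "c = 0" unfolding vec_eq_coef[of c 0] by simp
    then show False using aC C_iff zero_notin by blast
  qed
  moreover have "(a0, a) \<in> nonorth\<^sup>*" "(a0, c) \<in> nonorth\<^sup>*" using aC a0 by auto
  ultimately show False using inv by blast
qed

end

definition coef_total :: "complex^'n \<Rightarrow> real" where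
  "coef_total x = (\<Sum>i\<in>UNIV. Re (coef i x))"

lemma coef_total_diff: "coef_total (y - x) = coef_total y - coef_total x"
  unfolding coef_total_def by (simp add: coef_diff sum_subtractf)

lemma coef_total_pos: assumes "pos x" "x \<noteq> 0" shows "coef_total x > 0"
proof -
  obtain j where j: "coef j x \<noteq> 0" using coef_nonzero assms(2) by blast
  have "Re (coef i x) \<ge> 0" for i using pos_coef[OF assms(1), of i] by simp
  moreover have "Re (coef j x) > 0" using pos_coef[OF assms(1), of j] j by simp
  ultimately show ?thesis unfolding coef_total_def
    by (intro sum_pos2[of UNIV j]) auto
qed

context
  fixes C assumes C: "C \<in> rs_components Rpar"
begin

text \<open>A locally maximal root (one dominated by no other
  root of C) exists above every root of C; we show it is positive, dominant and of full
  support, and unique, so that it dominates every root of C.\<close>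
definition loc_max :: "complex^'n \<Rightarrow> bool" where
  "loc_max \<rho> \<longleftrightarrow> \<rho> \<in> C \<and> (\<forall>\<gamma>\<in>C. pos (\<gamma> - \<rho>) \<longrightarrow> \<gamma> = \<rho>)"

lemma finC: "finite C" using C_sub[OF C] finR R0_iff by (meson finite_subset subsetI)

text \<open>Above every root of C there is a locally maximal one: maximize coef_total.\<close>
lemma exists_loc_max_above: assumes "\<beta> \<in> C" shows "\<exists>\<rho>. loc_max \<rho> \<and> pos (\<rho> - \<beta>)"
proof -
  define T where "T = {\<gamma>\<in>C. pos (\<gamma> - \<beta>)}"
  have fT: "finite T" using finC unfolding T_def by simp
  have bT: "\<beta> \<in> T" using assms unfolding T_def by (simp add: pos_zero)
  have ne: "coef_total ` T \<noteq> {}" using bT by blast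
  obtain \<rho> where r: "\<rho> \<in> T" "coef_total \<rho> = Max (coef_total ` T)"
    using Max_in[OF finite_imageI[OF fT] ne] by auto
  have mx: "coef_total \<gamma> \<le> coef_total \<rho>" if "\<gamma> \<in> T" for \<gamma> using r Max_ge[OF finite_imageI[OF fT]] that by auto
  have "loc_max \<rho>" unfolding loc_max_def
  proof (intro conjI ballI impI)
    show "\<rho> \<in> C" using r unfolding T_def by auto
    fix \<gamma> assume g: "\<gamma> \<in> C" "pos (\<gamma> - \<rho>)"
    have "pos (\<gamma> - \<beta>)" using pos_add[OF g(2), of "\<rho> - \<beta>"] r unfolding T_def by simp
    then have "\<gamma> \<in> T" using g unfolding T_def by simp
    then have "coef_total \<gamma> \<le> coef_total \<rho>" using mx by blast
    then show "\<gamma> = \<rho>" using coef_total_pos[OF g(2)] coef_total_diff by force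
  qed
  then show ?thesis using r unfolding T_def by blast
qed

text \<open>A locally maximal root is positive, since otherwise -rho would dominate it.\<close>
lemma loc_max_pos: assumes "loc_max \<rho>" shows "pos \<rho>"
proof (rule ccontr)
  assume "\<not> pos \<rho>"
  have rC: "\<rho> \<in> C" using assms loc_max_def by blast
  have R: "\<rho> \<in> R" using rC C_iff[OF C] by blast
  have np: "pos (- \<rho>)" using root_pos_neg[OF R] \<open>\<not> pos \<rho>\<close> by blast
  have "- \<rho> \<in> C" using C_minus[OF C rC] .
  moreover have "pos (- \<rho> - \<rho>)" using pos_add[OF np np] by simp
  ultimately have "- \<rho> = \<rho>" using assms unfolding loc_max_def by blast
  then have "\<rho> + \<rho> = 0" by (metis add.left_inverse)
  then have "(1 + 1::complex) *s \<rho> = 0" by (simp only: vector_sadd_rdistrib vector_smult_lid)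
  then have "\<rho> = 0" by simp
  then show False using R zero_notin by blast
qed

text \<open>A locally maximal root has nonnegative pairing with every simple root of C, since
  otherwise the reflection would raise it.\<close>
lemma loc_max_dominant: assumes m: "loc_max \<rho>" and a: "\<alpha> i \<in> SC C" shows "Re (bil \<rho> (\<alpha> i)) \<ge> 0"
proof (rule ccontr)
  assume neg: "\<not> ?thesis"
  have rC: "\<rho> \<in> C" using m loc_max_def by blast
  have R: "\<rho> \<in> R" using rC C_iff[OF C] by blast
  obtain k where k: "bil (coroot (\<alpha> i)) \<rho> = of_int k" using intR[OF alphaR R] by (metis Ints_cases)
  define A where "A = Re (bil (\<alpha> i) (\<alpha> i))"
  define P where "P = Re (bil \<rho> (\<alpha> i))"
  have e1: "bil (\<alpha> i) \<rho> = of_real P" "bil (\<alpha> i) (\<alpha> i) = of_real A"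
    using bil_root_real[OF alphaR[of i] R] bil_root_real[OF alphaR[of i] alphaR[of i]]
    unfolding A_def P_def by (simp_all add: bil_sym)
  have aa: "A > 0" using root_self_pos alphaR unfolding A_def by blast
  have "(of_int k :: complex) = of_real (2 * P / A)"
    using k unfolding reflect_bil e1 by simp
  then have "real_of_int k = 2 * P / A"
    by (metis of_real_eq_iff of_real_of_int_eq)
  then have "real_of_int k < 0" using neg aa unfolding P_def by (simp add: divide_neg_pos)
  then have kn: "k < 0" by simp
  define \<gamma> where "\<gamma> = reflect (\<alpha> i) \<rho>"
  have g: "\<gamma> = \<rho> - of_int k *s \<alpha> i" unfolding \<gamma>_def reflect_def k ..
  have gR: "\<gamma> \<in> R" unfolding \<gamma>_def using reflR[OF alphaR R] .
  have "supp (SC C) \<gamma>" using C_iff[OF C] rC a unfolding g supp_def by (auto simp: coef_diff coef_scale coef_alpha)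
  then have gC: "\<gamma> \<in> C" using C_iff[OF C] gR by blast
  have kk: "(of_nat (nat (- k)) :: complex) = - of_int k" using kn by (simp add: of_nat_nat)
  have "\<gamma> - \<rho> = of_nat (nat (- k)) *s \<alpha> i" unfolding g kk
    by (simp add: vector_smult_lneg)
  then have "pos (\<gamma> - \<rho>)" using pos_scale_nat[OF pos_alpha] by simp
  then have "\<gamma> = \<rho>" using m gC unfolding loc_max_def by blast
  then have "of_int k *s \<alpha> i = 0" using g by simp
  moreover have "\<alpha> i \<noteq> 0" using alphaR zero_notin by metis
  ultimately show False using kn by simp
qed

text \<open>A locally maximal root rho has nonnegative pairing with the simple roots of C, and
  the simple roots of C outside the support of rho are nonpositive against all others; hence
  those outside the support are orthogonal to those inside.\<close>
lemma loc_max_support_orth: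
  assumes m: "loc_max \<rho>" and i: "coef i \<rho> \<noteq> 0" and j: "\<alpha> j \<in> SC C" "coef j \<rho> = 0"
  shows "bil (\<alpha> i) (\<alpha> j) = 0"
proof -
  have p: "pos \<rho>" using loc_max_pos[OF m] .
  have ij: "i \<noteq> j" using i j by blast
  have terms: "real (nat_coef m \<rho>) * Re (bil (\<alpha> j) (\<alpha> m)) \<le> 0" for m
  proof (cases "m = j")
    case True then show ?thesis using j pos_coef[OF p, of j] by simp
  next
    case False then show ?thesis
      using simple_bil_nonpos[OF False] by (simp add: bil_sym mult_nonneg_nonpos)
  qed
  have "Re (bil \<rho> (\<alpha> j)) \<ge> 0" using loc_max_dominant[OF m j(1)] .
  then have "(\<Sum>m\<in>UNIV. - (real (nat_coef m \<rho>) * Re (bil (\<alpha> j) (\<alpha> m)))) = 0"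
    using Re_bil_pos_expansion[OF p, of "\<alpha> j"] terms
      sum_nonpos[of UNIV "\<lambda>m. real (nat_coef m \<rho>) * Re (bil (\<alpha> j) (\<alpha> m))"]
    by (simp add: sum_negf bil_sym[of \<rho>])
  then have "real (nat_coef i \<rho>) * Re (bil (\<alpha> j) (\<alpha> i)) = 0"
    using terms by (subst (asm) sum_nonneg_eq_0_iff) auto
  moreover have "nat_coef i \<rho> \<noteq> 0" using i pos_coef[OF p, of i] by auto
  ultimately have "Re (bil (\<alpha> i) (\<alpha> j)) = 0" by (simp add: bil_sym)
  then show ?thesis using bil_root_real[OF alphaR[of i] alphaR[of j]] by simp
qed

text \<open>A locally maximal root involves every simple root of C, since C is connected.\<close>
lemma loc_max_full_support: assumes m: "loc_max \<rho>" and a: "\<alpha> i \<in> SC C" shows "coef i \<rho> \<noteq> 0"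
proof -
  have rC: "\<rho> \<in> C" using m loc_max_def by blast
  have sC: "supp (SC C) \<rho>" using rC C_iff[OF C] by blast
  define A where "A = {a\<in>SC C. \<exists>j. a = \<alpha> j \<and> coef j \<rho> \<noteq> 0}"
  have Ane: "A \<noteq> {}"
  proof -
    obtain j where "coef j \<rho> \<noteq> 0" using coef_nonzero rC C_iff[OF C] zero_notin by metis
    then show ?thesis using sC unfolding A_def supp_def by blast
  qed
  have orth: "\<forall>a\<in>A. \<forall>c\<in>SC C - A. bil a c = 0"
  proof (intro ballI)
    fix a c assume "a \<in> A" and cB: "c \<in> SC C - A"
    then obtain i' j where "a = \<alpha> i'" "coef i' \<rho> \<noteq> 0" "c = \<alpha> j" "coef j \<rho> = 0"
      using SC_sub[OF C] unfolding A_def by blast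
    then show "bil a c = 0" using loc_max_support_orth[OF m] cB by blast
  qed
  have "A = SC C" using component_connected[OF C _ Ane orth] unfolding A_def by blast
  then show ?thesis using a unfolding A_def using inj_alpha by (auto dest: injD)
qed

text \<open>Two locally maximal roots have positive pairing: rho is dominant for SC C and rho' has
  full support.\<close>
lemma loc_max_pairing_pos: assumes m: "loc_max \<rho>" "loc_max \<rho>'" shows "Re (bil \<rho> \<rho>') > 0"
proof -
  have R: "\<rho> \<in> R" using m(1) loc_max_def C_iff[OF C] by blast
  have p: "pos \<rho>" "pos \<rho>'" using loc_max_pos m by blast+
  have sC: "supp (SC C) \<rho>" "supp (SC C) \<rho>'" using m loc_max_def C_iff[OF C] by blast+
  have tnn: "real (nat_coef m x) * Re (bil \<rho> (\<alpha> m)) \<ge> 0" if "supp (SC C) x" "pos x" for m x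
  proof (cases "\<alpha> m \<in> SC C")
    case True then show ?thesis using loc_max_dominant[OF m(1) True] by simp
  next
    case False then show ?thesis using that pos_coef[OF that(2), of m] unfolding supp_def by simp
  qed
  obtain m0 where m0: "\<alpha> m0 \<in> SC C" "Re (bil \<rho> (\<alpha> m0)) > 0"
  proof (rule ccontr)
    assume "\<not> thesis"
    then have nonpos: "\<alpha> m \<in> SC C \<Longrightarrow> Re (bil \<rho> (\<alpha> m)) \<le> 0" for m
      using that by fastforce
    have "real (nat_coef m \<rho>) * Re (bil \<rho> (\<alpha> m)) = 0" for m
    proof (cases "\<alpha> m \<in> SC C")
      case True then show ?thesis using nonpos[OF True] loc_max_dominant[OF m(1) True] by simp
    next
      case False then show ?thesis using sC pos_coef[OF p(1), of m] unfolding supp_def by simp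
    qed
    then have "(\<Sum>m\<in>UNIV. real (nat_coef m \<rho>) * Re (bil \<rho> (\<alpha> m))) = 0"
      by (intro sum.neutral) blast
    then have "Re (bil \<rho> \<rho>) = 0" using Re_bil_pos_expansion[OF p(1)] by simp
    then show False using root_self_pos R by force
  qed
  have "real (nat_coef m0 \<rho>') * Re (bil \<rho> (\<alpha> m0)) > 0"
    using loc_max_full_support[OF m(2) m0(1)] pos_coef[OF p(2), of m0] m0(2) by simp
  then show ?thesis unfolding Re_bil_pos_expansion[OF p(2)] using tnn[OF sC(2) p(2)]
    by (intro sum_pos2[of UNIV m0]) auto
qed

text \<open>The locally maximal root is unique: otherwise rho - rho' would be a root of C, making
  one of the two dominate the other.\<close>
lemma loc_max_unique: assumes m: "loc_max \<rho>" "loc_max \<rho>'" shows "\<rho> = \<rho>'"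
proof (rule ccontr)
  assume ne: "\<rho> \<noteq> \<rho>'"
  have rC: "\<rho> \<in> C" "\<rho>' \<in> C" using m loc_max_def by blast+
  have R: "\<rho> \<in> R" "\<rho>' \<in> R" using rC C_iff[OF C] by blast+
  have p: "pos \<rho>" "pos \<rho>'" using loc_max_pos m by blast+
  have "\<rho>' \<noteq> - \<rho>" using root_not_both[OF R(1) p(1)] p(2) by blast
  then have d: "\<rho> - \<rho>' \<in> R" using root_string[OF R(1) R(2)] ne loc_max_pairing_pos[OF m] by metis
  consider "pos (\<rho> - \<rho>')" | "pos (\<rho>' - \<rho>)" using root_pos_neg[OF d] by auto
  then show False
    using m rC ne unfolding loc_max_def by (metis)
qed

lemma highest_root: obtains \<rho> where "\<rho> \<in> C" "pos \<rho>" "\<And>\<beta>. \<beta> \<in> C \<Longrightarrow> pos (\<rho> - \<beta>)"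
  "\<And>i. \<alpha> i \<in> SC C \<Longrightarrow> coef i \<rho> \<noteq> 0" "is_max_root C (SC C) \<rho>"
proof -
  obtain \<beta>0 where "\<beta>0 \<in> C" using C_nonempty[OF C] by blast
  then obtain \<rho> where m: "loc_max \<rho>" using exists_loc_max_above by blast
  have all: "pos (\<rho> - \<beta>)" if bC: "\<beta> \<in> C" for \<beta>
  proof -
    obtain \<rho>' where "loc_max \<rho>'" "pos (\<rho>' - \<beta>)" using exists_loc_max_above[OF bC] by blast
    then show ?thesis using loc_max_unique[OF m] by blast
  qed
  have rC: "\<rho> \<in> C" using m loc_max_def by blast
  have "is_max_root C (SC C) \<rho>" unfolding is_max_root_def
  proof (intro conjI ballI)
    show "\<rho> \<in> C" using rC .
    fix \<beta> assume b: "\<beta> \<in> C"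
    have "supp (SC C) (\<rho> - \<beta>)" using C_iff[OF C] rC b unfolding supp_def by (simp add: coef_diff)
    then show "nonneg_comb (SC C) (\<rho> - \<beta>)" using nonneg_comb_iff[OF SC_sub(1)[OF C]] all[OF b] by blast
  qed
  then show ?thesis using that rC loc_max_pos[OF m] all loc_max_full_support[OF m] by blast
qed

end

lemma weyl_component_pres: assumes C: "C \<in> rs_components Rpar" and w: "w \<in> weyl_group C" and x: "x \<in> C"
  shows "w x \<in> C"
proof -
  have "\<forall>a\<in>C. \<forall>c\<in>C. reflect a c \<in> C"
  proof (intro ballI)
    fix a c assume a: "a \<in> C" and c: "c \<in> C"
    have "reflect a c \<in> R" using reflR a c C_iff[OF C] by blast
    moreover have "supp (SC C) (reflect a c)" using a c C_iff[OF C] unfolding reflect_def supp_def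
      by (simp add: coef_diff coef_scale)
    ultimately show "reflect a c \<in> C" using C_iff[OF C] by blast
  qed
  then show ?thesis using weyl_pres[OF w] x by blast
qed

lemma weyl_component_R: "C \<in> rs_components Rpar \<Longrightarrow> w \<in> weyl_group C \<Longrightarrow> w \<in> weyl_group R"
  using weyl_mono C_sub R0_iff by blast

lemma nondeg_component: "C \<in> rs_components Rpar \<Longrightarrow> nondeg C"
  using C_sub R0_iff bilRR unfolding nondeg_def by blast

context
  fixes C \<rho> j0
  assumes C: "C \<in> rs_components Rpar" and rC: "\<rho> \<in> C" and rmax: "\<forall>\<beta>\<in>C. pos (\<rho> - \<beta>)"
    and j0: "\<alpha> j0 \<in> SC C" and c1: "coef j0 \<rho> = 1"
begin

text \<open>Let rho be the highest root of C and alpha_j0 a simple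
  root of C occurring in rho with coefficient 1.  Then (SC C - {alpha_j0}) union {-rho} is again a
  base of C (a fact not needed in full); its positive roots are those with npos, whose cone is ncone.  We only need that
  some element of the Weyl group of C maps SC C into this new base.\<close>
definition new_base :: "(complex^'n) set" where
  "new_base = (SC C - {\<alpha> j0}) \<union> {- \<rho>}"
definition npos :: "complex^'n \<Rightarrow> bool" where
  "npos x \<longleftrightarrow> (pos x \<and> coef j0 x = 0) \<or> coef j0 x = -1"
definition ncone :: "complex^'n \<Rightarrow> bool" where
  "ncone x \<longleftrightarrow> (\<exists>m::nat. pos (x + of_nat m *s \<rho>) \<and> coef j0 (x + of_nat m *s \<rho>) = 0)"

text \<open>The j0-th coordinate of a root of C is -1, 0 or 1, since rho dominates C = -C.\<close>
lemma coef_j0_range: assumes b: "\<beta> \<in> C" shows "coef j0 \<beta> = -1 \<or> coef j0 \<beta> = 0 \<or> coef j0 \<beta> = 1"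
proof -
  have "pos (\<rho> - \<beta>)" "pos (\<rho> - (- \<beta>))" using rmax b C_minus[OF C b] by auto
  then have "coef j0 (\<rho> - \<beta>) \<in> \<nat>" "coef j0 (\<rho> - (- \<beta>)) \<in> \<nat>" unfolding pos_def by blast+
  then have "1 - coef j0 \<beta> \<in> \<nat>" "1 + coef j0 \<beta> \<in> \<nat>" using c1 by (simp_all add: coef_diff coef_minus coef_add)
  then show ?thesis using Nats_one_pm by blast
qed

lemma npos_of_pos: assumes g: "\<gamma> \<in> C" "pos \<gamma>" shows "npos \<gamma> \<or> npos (- \<gamma>)"
proof -
  have "coef j0 \<gamma> \<in> \<nat>" using g unfolding pos_def by blast
  moreover have m1: "(-1::complex) \<notin> \<nat>" using Nats_neg_zero[of 1] by auto
  ultimately have "coef j0 \<gamma> = 0 \<or> coef j0 \<gamma> = 1" using coef_j0_range[OF g(1)] by auto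
  then show ?thesis unfolding npos_def using g(2) by (auto simp: coef_minus)
qed

lemma npos_or_neg: assumes b: "\<beta> \<in> C" shows "npos \<beta> \<or> npos (- \<beta>)"
proof -
  have R: "\<beta> \<in> R" using b C_iff[OF C] by blast
  consider "pos \<beta>" | "pos (- \<beta>)" using root_pos_neg[OF R] by blast
  then show ?thesis
  proof cases
    case 1 then show ?thesis using npos_of_pos[OF b] by blast
  next
    case 2 then show ?thesis using npos_of_pos[OF C_minus[OF C b]] by auto
  qed
qed

lemma npos_not_both: assumes b: "\<beta> \<in> C" "npos \<beta>" "npos (- \<beta>)" shows False
proof -
  have R: "\<beta> \<in> R" using b C_iff[OF C] by blast
  have one: "(1::complex) \<noteq> -1" by simp
  show False using b(2,3) unfolding npos_def coef_minus
  proof (elim disjE conjE)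
    assume "pos \<beta>" "pos (- \<beta>)" then show False using root_not_both[OF R] by blast
  qed (use one in auto)
qed

lemma npos_ncone: assumes b: "\<beta> \<in> C" "npos \<beta>" shows "ncone \<beta>"
  using b(2) unfolding npos_def
proof (elim disjE conjE)
  assume "pos \<beta>" "coef j0 \<beta> = 0"
  then show "ncone \<beta>" unfolding ncone_def by (intro exI[of _ 0]) simp
next
  assume c: "coef j0 \<beta> = -1"
  have "pos (\<rho> - (- \<beta>))" using rmax C_minus[OF C b(1)] by blast
  then show "ncone \<beta>" unfolding ncone_def using c c1
    by (intro exI[of _ 1]) (simp add: coef_add add.commute)
qed

lemma ncone_npos: assumes b: "\<beta> \<in> C" "ncone \<beta>" shows "npos \<beta>"
proof -
  obtain m :: nat where m: "pos (\<beta> + of_nat m *s \<rho>)" "coef j0 (\<beta> + of_nat m *s \<rho>) = 0"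
    using b(2) unfolding ncone_def by blast
  have c: "coef j0 \<beta> = - of_nat m" using m(2) c1 by (simp add: coef_add coef_scale eq_neg_iff_add_eq_0)
  consider "coef j0 \<beta> = -1" | "coef j0 \<beta> = 0" | "coef j0 \<beta> = 1" using coef_j0_range[OF b(1)] by blast
  then show ?thesis
  proof cases
    case 1 then show ?thesis unfolding npos_def by blast
  next
    case 2 then have "m = 0" using c by simp
    then show ?thesis using m 2 unfolding npos_def by simp
  next
    case 3
    then have "- (of_nat m :: complex) = 1" using c by simp
    then have "(of_nat m :: complex) = -1" by (metis minus_minus)
    then have "(of_nat (m + 1) :: complex) = 0" by simp
    then show ?thesis by (simp only: of_nat_eq_0_iff)
  qed
qed

lemma ncone_zero: "ncone 0" unfolding ncone_def by (intro exI[of _ 0]) (simp add: pos_zero)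

lemma ncone_add: assumes "ncone x" "ncone y" shows "ncone (x + y)"
proof -
  obtain m :: nat where m: "pos (x + of_nat m *s \<rho>)" "coef j0 (x + of_nat m *s \<rho>) = 0"
    using assms(1) unfolding ncone_def by blast
  obtain m' :: nat where m': "pos (y + of_nat m' *s \<rho>)" "coef j0 (y + of_nat m' *s \<rho>) = 0"
    using assms(2) unfolding ncone_def by blast
  have e: "x + y + of_nat (m + m') *s \<rho> = (x + of_nat m *s \<rho>) + (y + of_nat m' *s \<rho>)"
    by (simp add: vector_sadd_rdistrib algebra_simps)
  have c: "coef j0 (x + y + of_nat (m + m') *s \<rho>) = coef j0 (x + of_nat m *s \<rho>) + coef j0 (y + of_nat m' *s \<rho>)"
    by (subst e) (rule coef_add)
  have p: "pos (x + y + of_nat (m + m') *s \<rho>)" by (subst e) (rule pos_add[OF m(1) m'(1)])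
  show ?thesis unfolding ncone_def
    by (intro exI[of _ "m + m'"]) (use c p m(2) m'(2) in simp)
qed

lemma ncone_scale: assumes "ncone x" shows "ncone (of_nat k *s x)"
proof (induction k)
  case 0 then show ?case using ncone_zero by simp
next
  case (Suc k)
  have "of_nat (Suc k) *s x = x + of_nat k *s x" by (simp add: vector_sadd_rdistrib)
  then show ?case using ncone_add[OF assms Suc] by simp
qed

lemma ncone_sum: "(\<And>j. j \<in> A \<Longrightarrow> ncone (f j)) \<Longrightarrow> ncone (\<Sum>j\<in>A. f j)"
  by (induction A rule: infinite_finite_induct) (auto simp: ncone_zero ncone_add)

lemma new_base_props: assumes "\<xi> \<in> new_base" shows "\<xi> \<in> C \<and> npos \<xi>"
proof -
  consider "\<xi> \<in> SC C" "\<xi> \<noteq> \<alpha> j0" | "\<xi> = - \<rho>" using assms unfolding new_base_def by blast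
  then show ?thesis
  proof cases
    case 1
    then obtain i where i: "\<xi> = \<alpha> i" "i \<noteq> j0" using SC_sub[OF C] by blast
    have "\<xi> \<in> C" using 1 SC_sub[OF C] by blast
    moreover have "npos \<xi>" unfolding npos_def i using i(2) pos_alpha by (simp add: coef_alpha)
    ultimately show ?thesis by blast
  next
    case 2
    have "\<xi> \<in> C" using 2 C_minus[OF C rC] by simp
    moreover have "npos \<xi>" unfolding npos_def 2 using c1 by (simp add: coef_minus)
    ultimately show ?thesis by blast
  qed
qed

lemma npos_transfer: assumes w: "w \<in> weyl_group C" and h: "\<forall>a\<in>SC C. npos (inv w a)"
  and b: "\<beta> \<in> C" "pos \<beta>" shows "npos (inv w \<beta>)"
proof -
  have nd: "nondeg C" using nondeg_component[OF C] .
  have v: "inv w \<in> weyl_group C" using weyl_inv_in[OF nd w] .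
  have sb: "supp (SC C) \<beta>" using b C_iff[OF C] by blast
  have "\<beta> = (\<Sum>i\<in>UNIV. coef i \<beta> *s \<alpha> i)" by (rule coef_expansion)
  also have "\<dots> = (\<Sum>i\<in>UNIV. of_nat (nat_coef i \<beta>) *s \<alpha> i)" using pos_coef[OF b(2)] by simp
  finally have eq: "\<beta> = (\<Sum>i\<in>UNIV. of_nat (nat_coef i \<beta>) *s \<alpha> i)" .
  have "inv w \<beta> = inv w (\<Sum>i\<in>UNIV. of_nat (nat_coef i \<beta>) *s \<alpha> i)" using arg_cong[OF eq, of "inv w"] .
  also have "\<dots> = (\<Sum>i\<in>UNIV. of_nat (nat_coef i \<beta>) *s inv w (\<alpha> i))"
    by (simp add: weyl_sum[OF v] weyl_scale[OF v])
  finally have "inv w \<beta> = (\<Sum>i\<in>UNIV. of_nat (nat_coef i \<beta>) *s inv w (\<alpha> i))" .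
  moreover have "ncone (\<Sum>i\<in>UNIV. of_nat (nat_coef i \<beta>) *s inv w (\<alpha> i))"
  proof (rule ncone_sum)
    fix i
    show "ncone (of_nat (nat_coef i \<beta>) *s inv w (\<alpha> i))"
    proof (cases "\<alpha> i \<in> SC C")
      case True
      then have "inv w (\<alpha> i) \<in> C" using weyl_component_pres[OF C v] SC_sub[OF C] by blast
      then show ?thesis using ncone_scale npos_ncone h True by blast
    next
      case False
      then have "nat_coef i \<beta> = 0" using sb pos_coef[OF b(2), of i] unfolding supp_def by simp
      then show ?thesis using ncone_zero by simp
    qed
  qed
  ultimately show ?thesis using ncone_npos weyl_component_pres[OF C v b(1)] by simp
qed

text \<open>The new-positive roots of C made non-positive by w; the next three lemmas show by
  descent on its cardinality that some w leaves it empty.\<close>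
definition npos_inversions :: "(complex^'n \<Rightarrow> complex^'n) \<Rightarrow> (complex^'n) set" where
  "npos_inversions w = {x\<in>C. npos x \<and> \<not> pos (w x)}"

text \<open>If w has an inversion, then w^-1 sends some simple root of C outside the new-positive
  roots (otherwise npos_transfer would make every inversion new-negative).\<close>
lemma inversion_simple_witness:
  assumes w: "w \<in> weyl_group C" and ne: "npos_inversions w \<noteq> {}"
  shows "\<exists>a\<in>SC C. \<not> npos (inv w a)"
proof (rule ccontr)
  assume "\<not> ?thesis"
  then have h: "\<forall>a\<in>SC C. npos (inv w a)" by blast
  have nd: "nondeg C" using nondeg_component[OF C] .
  obtain x where x: "x \<in> C" "npos x" "\<not> pos (w x)" using ne unfolding npos_inversions_def by blast
  have wx: "w x \<in> C" using weyl_component_pres[OF C w x(1)] .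
  then have "pos (- w x)" using root_pos_neg x(3) C_iff[OF C] by blast
  then have "npos (inv w (- w x))" using npos_transfer[OF w h] C_minus[OF C wx] by blast
  then have "npos (- x)" using weyl_minus[OF weyl_inv_in[OF nd w]] weyl_inv_l[OF nd w] by simp
  then show False using npos_not_both[OF x(1,2)] by blast
qed

text \<open>For such a simple root a, composing with the reflection s_a removes the inversion
  -w^-1 a and creates no new one, so the number of inversions drops.\<close>
lemma inversions_decrease:
  assumes w: "w \<in> weyl_group C" and a: "a \<in> SC C" "\<not> npos (inv w a)"
  shows "card (npos_inversions (reflect a \<circ> w)) < card (npos_inversions w)"
proof -
  have nd: "nondeg C" using nondeg_component[OF C] .
  obtain i where ai: "a = \<alpha> i" using a SC_sub[OF C] by blast
  have aC: "a \<in> C" using a SC_sub[OF C] by blast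
  have ia: "inv w a \<in> C" using weyl_component_pres[OF C weyl_inv_in[OF nd w] aC] .
  define y where "y = - inv w a"
  have y: "y \<in> C" "npos y" using npos_or_neg[OF ia] a C_minus[OF C ia] unfolding y_def by auto
  have wy: "w y = - a" unfolding y_def using weyl_minus[OF w] weyl_inv_r[OF nd w] by simp
  have aa: "bil a a \<noteq> 0" using nd aC unfolding nondeg_def by blast
  have y_inv: "y \<in> npos_inversions w"
    unfolding npos_inversions_def using y wy root_not_both[OF alphaR pos_alpha] ai by auto
  have "reflect a (w y) = a" using wy reflect_minus[of a a] reflect_self[OF aa] by simp
  then have "y \<notin> npos_inversions (reflect a \<circ> w)" unfolding npos_inversions_def using ai pos_alpha by auto
  moreover have "npos_inversions (reflect a \<circ> w) \<subseteq> npos_inversions w"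
  proof
    fix x assume "x \<in> npos_inversions (reflect a \<circ> w)"
    then have x: "x \<in> C" "npos x" "\<not> pos (reflect a (w x))" unfolding npos_inversions_def by auto
    have "\<not> pos (w x)"
    proof
      assume p: "pos (w x)"
      have wxR: "w x \<in> R" using weyl_component_pres[OF C w x(1)] C_iff[OF C] by blast
      have "w x \<noteq> a"
      proof
        assume "w x = a"
        then have "x = - y" unfolding y_def using weyl_inv_l[OF nd w] by (metis minus_minus)
        then show False using npos_not_both[OF y] x(2) by simp
      qed
      then show False using simple_refl_pos[OF wxR p] x(3) ai by blast
    qed
    then show "x \<in> npos_inversions w" unfolding npos_inversions_def using x by blast
  qed
  ultimately have "npos_inversions (reflect a \<circ> w) \<subseteq> npos_inversions w - {y}" by blast
  moreover have "finite (npos_inversions w)" unfolding npos_inversions_def using finC[OF C] by simp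
  ultimately show ?thesis
    using y_inv by (meson card_Diff1_less card_mono finite_Diff order_le_less_trans)
qed

text \<open>Some element of the Weyl group of C makes all new-positive roots positive: take one
  with the fewest inversions.\<close>
lemma exists_weyl_npos_to_pos: "\<exists>w\<in>weyl_group C. \<forall>x\<in>C. npos x \<longrightarrow> pos (w x)"
proof -
  obtain w where w: "w \<in> weyl_group C"
    and least: "\<And>w'. w' \<in> weyl_group C \<Longrightarrow> card (npos_inversions w) \<le> card (npos_inversions w')"
    using ex_has_least_nat[of "\<lambda>w. w \<in> weyl_group C" id "\<lambda>w. card (npos_inversions w)"]
      weyl_group.weyl_id by blast
  have "npos_inversions w = {}"
  proof (rule ccontr)
    assume "npos_inversions w \<noteq> {}"
    then obtain a where a: "a \<in> SC C" "\<not> npos (inv w a)" using inversion_simple_witness[OF w] by blast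
    have "reflect a \<circ> w \<in> weyl_group C" using weyl_group.weyl_step[OF w] a(1) SC_sub[OF C] by blast
    then show False using least inversions_decrease[OF w a] by (meson not_le)
  qed
  then show ?thesis using w unfolding npos_inversions_def by blast
qed

lemma simple_root_indecomposable: assumes p: "p \<in> R" "pos p" and q: "pos q" and e: "\<alpha> g = p + q" shows "p = \<alpha> g"
proof -
  have z: "coef d p = 0" if "d \<noteq> g" for d
  proof -
    have "coef d p + coef d q = 0" using e that by (metis coef_add coef_alpha)
    then have "- coef d p \<in> \<nat>" using q unfolding pos_def by (metis add.commute add_eq_0_iff2 eq_neg_iff_add_eq_0)
    then show ?thesis using p(2) Nats_neg_zero unfolding pos_def by blast
  qed
  have "p = coef g p *s \<alpha> g" unfolding vec_eq_coef[of p] using z by (auto simp: coef_scale coef_alpha)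
  then have "coef g p = 1 \<or> coef g p = -1" using reduced_mult[OF alphaR[of g], of "coef g p"] p(1) by simp
  moreover have "coef g p \<noteq> -1" using p(2) Nats_neg_zero[of 1] unfolding pos_def by (metis Nats_1 one_neq_zero)
  ultimately show ?thesis using \<open>p = _\<close> by simp
qed

text \<open>If w makes all new-positive roots positive, it makes positive every positive
  combination of SC C - {alpha_j0}, these simple roots being part of the new base.\<close>
lemma pos_image_j0_free: assumes w: "w \<in> weyl_group C" and wp: "\<forall>x\<in>C. npos x \<longrightarrow> pos (w x)"
  and z: "pos z" "coef j0 z = 0" "supp (SC C) z" shows "pos (w z)"
proof -
  have "z = (\<Sum>i\<in>UNIV. coef i z *s \<alpha> i)" by (rule coef_expansion)
  also have "\<dots> = (\<Sum>i\<in>UNIV. of_nat (nat_coef i z) *s \<alpha> i)" using pos_coef[OF z(1)] by simp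
  finally have eq: "z = (\<Sum>i\<in>UNIV. of_nat (nat_coef i z) *s \<alpha> i)" .
  have "w z = w (\<Sum>i\<in>UNIV. of_nat (nat_coef i z) *s \<alpha> i)" using arg_cong[OF eq, of w] .
  also have "\<dots> = (\<Sum>i\<in>UNIV. of_nat (nat_coef i z) *s w (\<alpha> i))"
    by (simp add: weyl_sum[OF w] weyl_scale[OF w])
  finally have e: "w z = (\<Sum>i\<in>UNIV. of_nat (nat_coef i z) *s w (\<alpha> i))" .
  have "pos (of_nat (nat_coef i z) *s w (\<alpha> i))" for i
  proof (cases "nat_coef i z = 0")
    case True then show ?thesis using pos_zero by simp
  next
    case False
    then have "coef i z \<noteq> 0" using pos_coef[OF z(1), of i] by simp
    then have "\<alpha> i \<in> SC C" "i \<noteq> j0" using z(2,3) unfolding supp_def by auto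
    then have "\<alpha> i \<in> new_base" unfolding new_base_def using inj_alpha by (auto dest: injD)
    then have "pos (w (\<alpha> i))" using new_base_props wp by blast
    then show ?thesis using pos_scale_nat by simp
  qed
  then show ?thesis unfolding e by (intro pos_sum) auto
qed

lemma npos_split:
  assumes yC: "y \<in> C" and py: "npos y"
  shows "\<exists>\<xi> z. \<xi> \<in> new_base \<and> y = \<xi> + z \<and> pos z \<and> coef j0 z = 0 \<and> supp (SC C) z"
proof -
  have sy: "supp (SC C) y" using yC C_iff[OF C] by blast
  consider "pos y" "coef j0 y = 0" | "coef j0 y = -1" using py unfolding npos_def by blast
  then show ?thesis
  proof cases
    case 1
    obtain i where i: "coef i y \<noteq> 0" using coef_nonzero yC C_iff[OF C] zero_notin by metis
    have aiS: "\<alpha> i \<in> SC C" "i \<noteq> j0" using i sy 1(2) unfolding supp_def by auto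
    have aiX: "\<alpha> i \<in> new_base" unfolding new_base_def using aiS inj_alpha by (auto dest: injD)
    have "pos (y - \<alpha> i)" using pos_minus_simple[OF 1(1) i] .
    moreover have "coef j0 (y - \<alpha> i) = 0" using 1(2) aiS by (simp add: coef_diff coef_alpha)
    moreover have "supp (SC C) (y - \<alpha> i)"
      using sy aiS unfolding supp_def by (auto simp: coef_diff coef_alpha)
    ultimately show ?thesis using aiX by (intro exI[of _ "\<alpha> i"] exI[of _ "y - \<alpha> i"]) simp
  next
    case 2
    have "pos (y + \<rho>)" using rmax C_minus[OF C yC] by (metis diff_minus_eq_add add.commute)
    moreover have "coef j0 (y + \<rho>) = 0" using 2 c1 by (simp add: coef_add)
    moreover have "supp (SC C) (y + \<rho>)" using sy rC C_iff[OF C] unfolding supp_def by (auto simp: coef_add)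
    moreover have "- \<rho> \<in> new_base" unfolding new_base_def by blast
    ultimately show ?thesis by (intro exI[of _ "- \<rho>"] exI[of _ "y + \<rho>"]) simp
  qed
qed

text \<open>If w makes all new-positive roots positive and w (xi + z) is a simple root, for a
  splitting as in npos_split, then z = 0: the simple root cannot be a sum of two positive
  vectors w xi and w z with w xi a root unless w xi is the simple root itself.\<close>
lemma simple_preimage_in_new_base:
  assumes w: "w \<in> weyl_group C" and wp: "\<forall>x\<in>C. npos x \<longrightarrow> pos (w x)"
    and \<xi>: "\<xi> \<in> new_base" and z: "pos z" "coef j0 z = 0" "supp (SC C) z"
    and simple: "w (\<xi> + z) = \<alpha> g"
  shows "\<xi> + z \<in> new_base"
proof -
  have pwz: "pos (w z)" using pos_image_j0_free[OF w wp z] .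
  have pwa: "pos (w \<xi>)" using new_base_props[OF \<xi>] wp by blast
  have wR: "w \<xi> \<in> R" using weyl_component_pres[OF C w] new_base_props[OF \<xi>] C_iff[OF C] by blast
  have "\<alpha> g = w \<xi> + w z" using simple weyl_add[OF w] by simp
  then have "w \<xi> = w (\<xi> + z)" using simple_root_indecomposable[OF wR pwa pwz] simple by simp
  then have "\<xi> = \<xi> + z" using weyl_inv_l[OF nondeg_component[OF C] w] by metis
  then show ?thesis using \<xi> by simp
qed

text \<open>Some element of the Weyl group of C maps every simple root of C into the new base:
  take the inverse of an element making all new-positive roots positive.\<close>
lemma exists_weyl_to_new_base: "\<exists>v\<in>weyl_group C. \<forall>\<gamma>\<in>SC C. v \<gamma> \<in> new_base"
proof -
  have nd: "nondeg C" using nondeg_component[OF C] .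
  obtain w where w: "w \<in> weyl_group C" and wp: "\<forall>x\<in>C. npos x \<longrightarrow> pos (w x)"
    using exists_weyl_npos_to_pos by blast
  have v: "inv w \<in> weyl_group C" using weyl_inv_in[OF nd w] .
  have "inv w \<gamma> \<in> new_base" if g: "\<gamma> \<in> SC C" for \<gamma>
  proof -
    obtain g where gi: "\<gamma> = \<alpha> g" using g SC_sub[OF C] by blast
    define y where "y = inv w \<gamma>"
    have yC: "y \<in> C" unfolding y_def using weyl_component_pres[OF C v] g SC_sub[OF C] by blast
    have wy: "w y = \<gamma>" unfolding y_def using weyl_inv_r[OF nd w] .
    have "npos y"
    proof (rule ccontr)
      assume "\<not> npos y"
      then have "pos (w (- y))" using npos_or_neg[OF yC] wp C_minus[OF C yC] by blast
      then have "pos (- \<gamma>)" using weyl_minus[OF w] wy by simp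
      then show False using root_not_both[OF alphaR pos_alpha] gi by blast
    qed
    then obtain \<xi> z where "\<xi> \<in> new_base" "y = \<xi> + z" "pos z" "coef j0 z = 0" "supp (SC C) z"
      using npos_split[OF yC] by blast
    then show ?thesis using simple_preimage_in_new_base[OF w wp] wy gi unfolding y_def by metis
  qed
  then show ?thesis using v by blast
qed

end

lemma comp_class: assumes C: "C \<in> rs_components Rpar" and b: "\<beta> \<in> C"
  shows "C = {x\<in>Rpar. (\<beta>, x) \<in> nonorth\<^sup>*}"
proof -
  obtain a where a: "a \<in> Rpar" "C = {\<beta>\<in>Rpar. (a, \<beta>) \<in> nonorth\<^sup>*}" using C_obtain[OF C] by blast
  have ab: "(a, \<beta>) \<in> nonorth\<^sup>*" "(\<beta>, a) \<in> nonorth\<^sup>*" using a b nonorth_rtrancl_sym by auto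
  show ?thesis unfolding a(2) using ab by (auto intro: rtrancl_trans)
qed

lemma comp_eq: "C \<in> rs_components Rpar \<Longrightarrow> C' \<in> rs_components Rpar \<Longrightarrow> \<beta> \<in> C \<Longrightarrow> \<beta> \<in> C' \<Longrightarrow> C = C'"
  using comp_class[of C \<beta>] comp_class[of C' \<beta>] by simp

lemma comp_orth: assumes C: "C \<in> rs_components Rpar" "C' \<in> rs_components Rpar" "C \<noteq> C'"
  and b: "\<beta> \<in> C" "\<beta>' \<in> C'" shows "bil \<beta> \<beta>' = 0"
proof (rule ccontr)
  assume "bil \<beta> \<beta>' \<noteq> 0"
  then have "\<beta>' \<in> C" using C_closed[OF C(1) b(1)] C_sub[OF C(2)] b(2) by blast
  then show False using comp_eq[OF C(1,2) _ b(2)] C(3) by blast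
qed

lemma comp_of: assumes "a \<in> Rpar" shows "{x\<in>Rpar. (a, x) \<in> nonorth\<^sup>*} \<in> rs_components Rpar" "a \<in> {x\<in>Rpar. (a, x) \<in> nonorth\<^sup>*}"
  using assms unfolding rs_components_nonorth by auto

lemma finite_comps: "finite (rs_components Rpar)"
proof -
  have "rs_components Rpar \<subseteq> Pow R" using C_sub R0_iff by blast
  then show ?thesis by (rule finite_subset) (simp add: finR)
qed

lemma weyl_component_fixes_others:
  assumes C1: "C1 \<in> rs_components Rpar" and v: "v \<in> weyl_group C1"
    and C: "C \<in> rs_components Rpar" "C \<noteq> C1" and x: "x \<in> C"
  shows "v x = x"
proof -
  have "\<forall>c\<in>C1. bil c x = 0" using comp_orth[OF C1 C(1)] C(2) x by auto
  then show ?thesis using weyl_fix[OF v] by blast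
qed

lemma combine_component_weyl: assumes F: "F \<subseteq> rs_components Rpar"
  and vC: "\<And>C. C \<in> F \<Longrightarrow> vv C \<in> weyl_group C \<and> (\<forall>\<gamma>\<in>SC C. vv C \<gamma> \<in> C)"
  shows "\<exists>v\<in>weyl_group R. \<forall>C\<in>rs_components Rpar. \<forall>\<gamma>\<in>SC C. v \<gamma> = (if C \<in> F then vv C \<gamma> else \<gamma>)"
proof -
  have fin: "finite F" using F finite_comps finite_subset by blast
  show ?thesis using fin F vC
  proof (induction F rule: finite_induct)
    case empty then show ?case by (intro bexI[of _ id]) (auto intro: weyl_group.weyl_id)
  next
    case (insert C1 F)
    obtain v where v: "v \<in> weyl_group R"
      "\<forall>C\<in>rs_components Rpar. \<forall>\<gamma>\<in>SC C. v \<gamma> = (if C \<in> F then vv C \<gamma> else \<gamma>)"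
      using insert.IH[OF _ insert.prems(2)] insert.prems(1) by blast
    have C1: "C1 \<in> rs_components Rpar" using insert by blast
    have v1: "vv C1 \<in> weyl_group C1" "\<forall>\<gamma>\<in>SC C1. vv C1 \<gamma> \<in> C1" using insert.prems(2)[of C1] by blast+
    have v1R: "vv C1 \<in> weyl_group R" using weyl_component_R[OF C1 v1(1)] .
    note fix1 = weyl_component_fixes_others[OF C1 v1(1)]
    have "\<forall>C\<in>rs_components Rpar. \<forall>\<gamma>\<in>SC C. (vv C1 \<circ> v) \<gamma> = (if C \<in> insert C1 F then vv C \<gamma> else \<gamma>)"
    proof (intro ballI)
      fix C \<gamma> assume C: "C \<in> rs_components Rpar" and g: "\<gamma> \<in> SC C"
      have gC: "\<gamma> \<in> C" using g SC_sub[OF C] by blast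
      show "(vv C1 \<circ> v) \<gamma> = (if C \<in> insert C1 F then vv C \<gamma> else \<gamma>)"
      proof (cases "C \<in> F")
        case True
        then have "C \<noteq> C1" using insert.hyps by blast
        moreover have "vv C \<gamma> \<in> C" using insert.prems(2)[of C] True g by blast
        ultimately show ?thesis using v(2) C g True fix1[OF C] by simp
      next
        case False
        show ?thesis
        proof (cases "C = C1")
          case True then show ?thesis using v(2) C g False by simp
        next
          case ne: False then show ?thesis using v(2) C g False fix1[OF C ne gC] by simp
        qed
      qed
    qed
    then show ?case using weyl_comp[OF v1R v(1)] by blast
  qed
qed

lemma supp_repr: assumes S: "S \<subseteq> range \<alpha>" and s: "supp S x"
  shows "x = (\<Sum>\<gamma>\<in>S. coef (inv \<alpha> \<gamma>) x *s \<gamma>)"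
proof -
  have "x = (\<Sum>i\<in>UNIV. coef i x *s \<alpha> i)" by (rule coef_expansion)
  also have "\<dots> = (\<Sum>i\<in>UNIV. (if \<alpha> i \<in> S then coef (inv \<alpha> (\<alpha> i)) x else 0) *s \<alpha> i)"
    using s inj_alpha unfolding supp_def by (intro sum.cong) auto
  also have "\<dots> = (\<Sum>\<gamma>\<in>S. coef (inv \<alpha> \<gamma>) x *s \<gamma>)" using comb_sub[OF S] by simp
  finally show ?thesis .
qed

lemma coef_weyl_image:
  assumes w: "w \<in> weyl_group R" and wS: "\<forall>a\<in>S0. pos (w a)" and x: "pos x" "supp S0 x"
  shows "coef k (w x) = of_nat (\<Sum>i\<in>UNIV. nat_coef i x * nat_coef k (w (\<alpha> i)))"
proof -
  have "w x = (\<Sum>i\<in>UNIV. coef i x *s w (\<alpha> i))"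
    using arg_cong[OF coef_expansion[of x], of w] by (simp add: weyl_sum[OF w] weyl_scale[OF w])
  then have "coef k (w x) = (\<Sum>i\<in>UNIV. coef i x * coef k (w (\<alpha> i)))" by (simp add: coef_sum coef_scale)
  also have "\<dots> = (\<Sum>i\<in>UNIV. of_nat (nat_coef i x * nat_coef k (w (\<alpha> i))))"
  proof (rule sum.cong)
    fix i show "coef i x * coef k (w (\<alpha> i)) = of_nat (nat_coef i x * nat_coef k (w (\<alpha> i)))"
    proof (cases "\<alpha> i \<in> S0")
      case True then show ?thesis using pos_coef[OF x(1)] pos_coef wS by simp
    next
      case False
      then have "coef i x = 0" using x(2) unfolding supp_def by blast
      then show ?thesis using pos_coef[OF x(1), of i] by simp
    qed
  qed simp
  finally show ?thesis by simp
qed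

lemma minuscule_on_component:
  assumes C: "C \<in> rs_components Rpar" and w: "w \<in> weyl_group R"
    and wS: "\<forall>a\<in>S0. pos (w a)"
    and minuscule: "\<forall>\<beta>\<in>R. pos \<beta> \<longrightarrow> coef k \<beta> = 0 \<or> coef k \<beta> = 1"
    and r: "\<rho> \<in> C" "pos \<rho>" "\<forall>i. \<alpha> i \<in> SC C \<longrightarrow> coef i \<rho> \<noteq> 0"
    and j: "\<alpha> j \<in> SC C" "coef k (w (\<alpha> j)) = 1"
  shows "coef k (w \<rho>) = 1" "coef j \<rho> = 1"
    and "\<forall>i. \<alpha> i \<in> SC C \<longrightarrow> i \<noteq> j \<longrightarrow> coef k (w (\<alpha> i)) = 0"
proof -
  have rho_in_R: "\<rho> \<in> R" using r(1) C_iff[OF C] by blast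
  have "supp (SC C) \<rho>" using r(1) C_iff[OF C] by blast
  then have "supp S0 \<rho>" using SC_sub(2)[OF C] unfolding supp_def by blast
  define tm where "tm i = nat_coef i \<rho> * nat_coef k (w (\<alpha> i))" for i
  have ck: "coef k (w \<rho>) = of_nat (\<Sum>i\<in>UNIV. tm i)"
    unfolding tm_def by (rule coef_weyl_image[OF w wS r(2) \<open>supp S0 \<rho>\<close>])
  have jS0: "\<alpha> j \<in> S0" using j SC_sub[OF C] by blast
  have ej: "nat_coef k (w (\<alpha> j)) = 1" using pos_coef[of "w (\<alpha> j)" k] wS jS0 j(2) by simp
  have nj: "nat_coef j \<rho> \<ge> 1" using r(3) j(1) pos_coef[OF r(2), of j] by (cases "nat_coef j \<rho>") auto
  have tj: "tm j \<ge> 1" unfolding tm_def using ej nj by simp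
  have le: "tm j \<le> (\<Sum>i\<in>UNIV. tm i)" by (rule member_le_sum) auto
  have n2: "coef k (w \<rho>) \<noteq> 0" unfolding ck of_nat_eq_0_iff using tj le by linarith
  have "coef k (w \<rho>) \<in> \<nat>" unfolding ck by (rule of_nat_in_Nats)
  then have "pos (w \<rho>)" using pos_of_coef[OF weylR[OF w rho_in_R] _ n2] by blast
  then have "coef k (w \<rho>) = 1" using minuscule weylR[OF w rho_in_R] n2 by blast
  then have sum1: "(\<Sum>i\<in>UNIV. tm i) = 1" unfolding ck of_nat_eq_1_iff .
  then show "coef k (w \<rho>) = 1" using ck by simp
  show "\<forall>i. \<alpha> i \<in> SC C \<longrightarrow> i \<noteq> j \<longrightarrow> coef k (w (\<alpha> i)) = 0"
  proof (intro allI impI)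
    fix i assume i: "\<alpha> i \<in> SC C" "i \<noteq> j"
    have "tm i + tm j = (\<Sum>i\<in>{i, j}. tm i)" using i(2) by simp
    also have "\<dots> \<le> (\<Sum>i\<in>UNIV. tm i)" by (rule sum_mono2) auto
    finally have "tm i = 0" using sum1 tj by simp
    moreover have "nat_coef i \<rho> \<noteq> 0" using r(3) i(1) pos_coef[OF r(2), of i] by auto
    ultimately have "nat_coef k (w (\<alpha> i)) = 0" unfolding tm_def by simp
    moreover have "\<alpha> i \<in> S0" using i SC_sub[OF C] by blast
    ultimately show "coef k (w (\<alpha> i)) = 0" using pos_coef wS by simp
  qed
  have "nat_coef j \<rho> = 1" using le sum1 nj ej unfolding tm_def by simp
  then show "coef j \<rho> = 1" using pos_coef[OF r(2), of j] by simp
qed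

lemma component_twist:
  assumes C: "C \<in> rs_components Rpar" and w: "w \<in> weyl_group R"
    and wS: "\<forall>a\<in>S0. pos (w a)"
    and minuscule: "\<forall>\<beta>\<in>R. pos \<beta> \<longrightarrow> coef k \<beta> = 0 \<or> coef k \<beta> = 1"
    and hit: "\<exists>\<gamma>\<in>SC C. coef k (w \<gamma>) = 1"
  shows "\<exists>\<rho> v. is_max_root C (SC C) \<rho> \<and> coef k (w \<rho>) = 1 \<and> v \<in> weyl_group C
     \<and> (\<forall>\<gamma>\<in>SC C. v \<gamma> \<in> C \<and> ((v \<gamma> \<in> SC C \<and> coef k (w (v \<gamma>)) = 0) \<or> v \<gamma> = - \<rho>))"
proof -
  obtain \<rho> where r: "\<rho> \<in> C" "pos \<rho>" "\<And>\<beta>. \<beta> \<in> C \<Longrightarrow> pos (\<rho> - \<beta>)"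
    "\<And>i. \<alpha> i \<in> SC C \<Longrightarrow> coef i \<rho> \<noteq> 0" "is_max_root C (SC C) \<rho>"
    using highest_root[OF C] by blast
  obtain j where j: "\<alpha> j \<in> SC C" "coef k (w (\<alpha> j)) = 1" using hit SC_sub[OF C] by blast
  have rmax: "\<forall>\<beta>\<in>C. pos (\<rho> - \<beta>)" using r(3) by blast
  have full: "\<forall>i. \<alpha> i \<in> SC C \<longrightarrow> coef i \<rho> \<noteq> 0" using r(4) by blast
  note m = minuscule_on_component[OF C w wS minuscule r(1,2) full j]
  note base = new_base_def[OF C r(1) rmax j(1) m(2)] new_base_props[OF C r(1) rmax j(1) m(2)]
  obtain v where v: "v \<in> weyl_group C" "\<forall>\<gamma>\<in>SC C. v \<gamma> \<in> new_base C \<rho> j"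
    using exists_weyl_to_new_base[OF C r(1) rmax j(1) m(2)] by blast
  have "v \<gamma> \<in> C \<and> ((v \<gamma> \<in> SC C \<and> coef k (w (v \<gamma>)) = 0) \<or> v \<gamma> = - \<rho>)" if g: "\<gamma> \<in> SC C" for \<gamma>
  proof -
    have X: "v \<gamma> \<in> new_base C \<rho> j" using v g by blast
    have "v \<gamma> \<in> C" using base(2)[OF X] by blast
    moreover have "(v \<gamma> \<in> SC C \<and> coef k (w (v \<gamma>)) = 0) \<or> v \<gamma> = - \<rho>"
    proof -
      consider "v \<gamma> \<in> SC C" "v \<gamma> \<noteq> \<alpha> j" | "v \<gamma> = - \<rho>" using X unfolding base(1) by blast
      then show ?thesis
      proof cases
        case 1
        then obtain i where i: "v \<gamma> = \<alpha> i" "i \<noteq> j" using SC_sub[OF C] by blast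
        then have "coef k (w (\<alpha> i)) = 0" using 1(1) m(3) by metis
        then show ?thesis using 1(1) i(1) by simp
      next
        case 2
        then show ?thesis by simp
      qed
    qed
    ultimately show ?thesis ..
  qed
  then show ?thesis using r(5) m(1) v(1) by blast
qed

text \<open>Gluing the elements of component_twist over all components that w S0 meets: one
  element v of the Weyl group of R_0 that handles every simple root of S0 at once.\<close>
lemma twist_S0:
  assumes w: "w \<in> weyl_group R" and wS: "\<forall>a\<in>S0. pos (w a)"
    and minuscule: "\<forall>\<beta>\<in>R. pos \<beta> \<longrightarrow> coef k \<beta> = 0 \<or> coef k \<beta> = 1"
  shows "\<exists>v\<in>weyl_group R. \<forall>a\<in>S0. (v a \<in> S0 \<and> coef k (w (v a)) = 0)
     \<or> (\<exists>C \<rho>. C \<in> rs_components Rpar \<and> is_max_root C (SC C) \<rho> \<and> coef k (w \<rho>) = 1 \<and> v a = - \<rho>)"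
proof -
  define Hit where "Hit = {C\<in>rs_components Rpar. \<exists>\<gamma>\<in>SC C. coef k (w \<gamma>) = 1}"
  have "\<forall>C\<in>Hit. \<exists>\<rho> v. is_max_root C (SC C) \<rho> \<and> coef k (w \<rho>) = 1 \<and> v \<in> weyl_group C
     \<and> (\<forall>\<gamma>\<in>SC C. v \<gamma> \<in> C \<and> ((v \<gamma> \<in> SC C \<and> coef k (w (v \<gamma>)) = 0) \<or> v \<gamma> = - \<rho>))"
    using component_twist[OF _ w wS minuscule] unfolding Hit_def by blast
  then obtain \<rho>f vf where VF: "\<forall>C\<in>Hit. is_max_root C (SC C) (\<rho>f C) \<and> coef k (w (\<rho>f C)) = 1
     \<and> vf C \<in> weyl_group C \<and> (\<forall>\<gamma>\<in>SC C. vf C \<gamma> \<in> C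
       \<and> ((vf C \<gamma> \<in> SC C \<and> coef k (w (vf C \<gamma>)) = 0) \<or> vf C \<gamma> = - \<rho>f C))"
    by metis
  have Hit_sub: "Hit \<subseteq> rs_components Rpar" unfolding Hit_def by blast
  obtain v where v: "v \<in> weyl_group R"
    "\<forall>C\<in>rs_components Rpar. \<forall>\<gamma>\<in>SC C. v \<gamma> = (if C \<in> Hit then vf C \<gamma> else \<gamma>)"
    using combine_component_weyl[OF Hit_sub, of vf] VF by blast
  have "(v a \<in> S0 \<and> coef k (w (v a)) = 0)
     \<or> (\<exists>C \<rho>. C \<in> rs_components Rpar \<and> is_max_root C (SC C) \<rho> \<and> coef k (w \<rho>) = 1 \<and> v a = - \<rho>)"
    if a: "a \<in> S0" for a
  proof -
    define C where "C = {x\<in>Rpar. (a, x) \<in> nonorth\<^sup>*}"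
    have C: "C \<in> rs_components Rpar" "a \<in> C" using comp_of[OF S0_Rpar[OF a]] unfolding C_def by auto
    have aSC: "a \<in> SC C" using a C SC_def[OF C(1)] by blast
    show ?thesis
    proof (cases "C \<in> Hit")
      case False
      then have "coef k (w a) \<noteq> 1" using C aSC unfolding Hit_def by blast
      then have "coef k (w a) = 0" using minuscule wS weylR[OF w] S0R a by blast
      then show ?thesis using v(2) C aSC False a by simp
    next
      case True
      then show ?thesis using VF v(2) C aSC SC_sub(2)[OF C(1)] by fastforce
    qed
  qed
  then show ?thesis using v(1) by blast
qed

text \<open>A point z lies in D as soon as some Weyl group element w makes S0 positive and
  maps each a in S0 to a root whose pairing with z is eta_a: then inv w z lies on the
  hyperplane H_eta(S0).\<close>
lemma Dset_memberI:
  assumes w: "w \<in> weyl_group R" and key: "\<forall>a\<in>S0. pos (w a) \<and> bil (w a) z = \<eta> a"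
  shows "z \<in> Dset R \<alpha> \<eta> S0"
proof -
  define x where "x = inv w z"
  have zx: "z = w x" unfolding x_def using weyl_inv_r[OF nondegR w] by simp
  have "bil a x = \<eta> a" if a: "a \<in> S0" for a
    using weyl_bil[OF w nondegR, of a x] key a zx by simp
  then have "x \<in> Hyp \<eta> S0" unfolding Hyp_def by blast
  moreover have "w \<in> Wplus R \<alpha> S0" unfolding Wplus_def pos_roots_eq
    using w key weylR[OF w] S0R by blast
  ultimately show ?thesis unfolding Dset_def using zx by blast
qed

text \<open>The point where the generalized Coxeter number enters: on H_eta(S0) the highest root
  rho of a component of R_0 pairs to hbar - eta_rho.\<close>
lemma max_root_on_Hyp:
  assumes C: "C \<in> rs_components Rpar" and mr: "is_max_root C (SC C) \<rho>"
    and x: "x \<in> Hyp \<eta> S0" and cox: "coxeter_condition R S0 \<eta> hbar"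
  shows "bil \<rho> x = hbar - \<eta> \<rho>"
proof -
  have "\<rho> \<in> C" using mr unfolding is_max_root_def by blast
  then have sr: "supp (SC C) \<rho>" using C_iff[OF C] by blast
  define c where "c \<gamma> = coef (inv \<alpha> \<gamma>) \<rho>" for \<gamma>
  have rep: "\<rho> = (\<Sum>\<gamma>\<in>SC C. c \<gamma> *s \<gamma>)" unfolding c_def using supp_repr[OF SC_sub(1)[OF C] sr] .
  have cx: "\<eta> \<rho> + (\<Sum>\<gamma>\<in>SC C. c \<gamma> * \<eta> \<gamma>) = hbar"
    using cox C mr rep unfolding coxeter_condition_def SC_def[OF C] by blast
  have "bil \<rho> x = (\<Sum>\<gamma>\<in>SC C. c \<gamma> * bil \<gamma> x)"
    by (subst rep) (simp add: bil_sum_left bil_scale_left)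
  also have "\<dots> = (\<Sum>\<gamma>\<in>SC C. c \<gamma> * \<eta> \<gamma>)"
    using x SC_sub(2)[OF C] unfolding Hyp_def by (intro sum.cong) auto
  finally show ?thesis using cx by (simp add: algebra_simps)
qed

lemma neg_max_root_shift:
  assumes g: "g \<in> weyl_group R" and w: "w \<in> weyl_group R"
    and P2: "\<forall>\<beta>\<in>R. pos \<beta> \<longrightarrow> coef k \<beta> = 1 \<longrightarrow> pos (- g \<beta>) \<and> bil (g \<beta>) t = -1"
    and C: "C \<in> rs_components Rpar" and mr: "is_max_root C (SC C) \<rho>" and ck: "coef k (w \<rho>) = 1"
    and x: "x \<in> Hyp \<eta> S0" and cox: "coxeter_condition R S0 \<eta> hbar"
  shows "pos (g (w (- \<rho>))) \<and> bil (g (w (- \<rho>))) (g (w x) + hbar *s t) = \<eta> \<rho>"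
proof -
  have rR: "\<rho> \<in> R" using mr C_iff[OF C] unfolding is_max_root_def by blast
  have wrR: "w \<rho> \<in> R" using weylR[OF w rR] .
  have "pos (w \<rho>)" using pos_of_coef[OF wrR, of k] ck by simp
  then have P: "pos (- g (w \<rho>)) \<and> bil (g (w \<rho>)) t = -1" using P2 wrR ck by blast
  have gwm: "g (w (- \<rho>)) = - g (w \<rho>)" using weyl_minus[OF w] weyl_minus[OF g] by simp
  have "bil (g (w (- \<rho>))) (g (w x) + hbar *s t) = - bil \<rho> x + hbar"
    using gwm P nondegR by (simp add: bil_add_right bil_scale_right bil_minus_left weyl_bil[OF g] weyl_bil[OF w])
  then show ?thesis using max_root_on_Hyp[OF C mr x cox] P gwm by simp
qed

text \<open>A point w x of D is moved there by first twisting with twist_S0; the roots sent to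
  minus a highest root acquire the shift hbar, which max_root_on_Hyp compensates.\<close>
lemma affine_map_preserves_D:
  assumes g: "g \<in> weyl_group R"
    and minuscule: "\<forall>\<beta>\<in>R. pos \<beta> \<longrightarrow> coef k \<beta> = 0 \<or> coef k \<beta> = 1"
    and P1: "\<forall>\<beta>\<in>R. pos \<beta> \<longrightarrow> coef k \<beta> = 0 \<longrightarrow> pos (g \<beta>) \<and> bil (g \<beta>) t = 0"
    and P2: "\<forall>\<beta>\<in>R. pos \<beta> \<longrightarrow> coef k \<beta> = 1 \<longrightarrow> pos (- g \<beta>) \<and> bil (g \<beta>) t = -1"
    and eta_inv: "\<forall>w\<in>weyl_group R. \<forall>\<beta>\<in>R. \<eta> (w \<beta>) = \<eta> \<beta>"
    and cox: "coxeter_condition R S0 \<eta> hbar"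
  shows "(\<lambda>y. g y + hbar *s t) ` Dset R \<alpha> \<eta> S0 \<subseteq> Dset R \<alpha> \<eta> S0"
proof
  fix z assume "z \<in> (\<lambda>y. g y + hbar *s t) ` Dset R \<alpha> \<eta> S0"
  then obtain w x where w: "w \<in> weyl_group R" "w ` S0 \<subseteq> pos_roots R \<alpha>" and x: "x \<in> Hyp \<eta> S0"
    and z: "z = g (w x) + hbar *s t"
    unfolding Dset_def Wplus_def by blast
  have wS: "\<forall>a\<in>S0. pos (w a)" using w(2) unfolding pos_roots_eq by auto
  have hx: "\<And>a. a \<in> S0 \<Longrightarrow> bil a x = \<eta> a" using x unfolding Hyp_def by blast
  obtain v where v: "v \<in> weyl_group R" and va: "\<forall>a\<in>S0. (v a \<in> S0 \<and> coef k (w (v a)) = 0)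
     \<or> (\<exists>C \<rho>. C \<in> rs_components Rpar \<and> is_max_root C (SC C) \<rho> \<and> coef k (w \<rho>) = 1 \<and> v a = - \<rho>)"
    using twist_S0[OF w(1) wS minuscule] by blast
  define w' where "w' = g \<circ> w \<circ> v"
  have w': "w' \<in> weyl_group R" unfolding w'_def using weyl_comp[OF weyl_comp[OF g w(1)] v] .
  have "pos (w' a) \<and> bil (w' a) z = \<eta> a" if a: "a \<in> S0" for a
  proof -
    have eta_va: "\<eta> (v a) = \<eta> a" using eta_inv v a S0R by blast
    consider "v a \<in> S0" "coef k (w (v a)) = 0"
      | C \<rho> where "C \<in> rs_components Rpar" "is_max_root C (SC C) \<rho>" "coef k (w \<rho>) = 1" "v a = - \<rho>"
      using va a by blast
    then show ?thesis
    proof cases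
      case 1
      then have "pos (g (w (v a))) \<and> bil (g (w (v a))) t = 0"
        using P1 wS weylR[OF w(1)] S0R by blast
      moreover have "bil (g (w (v a))) z = bil (v a) x + hbar * bil (g (w (v a))) t"
        unfolding z using nondegR
        by (simp add: bil_add_right bil_scale_right weyl_bil[OF g] weyl_bil[OF w(1)])
      ultimately show ?thesis using hx[OF 1(1)] eta_va unfolding w'_def by simp
    next
      case 2
      have rR: "\<rho> \<in> R" using 2(1,2) C_iff unfolding is_max_root_def by blast
      have "\<eta> (- \<rho>) = \<eta> \<rho>"
        using eta_inv reflect_weyl[OF rR] rR reflect_self[OF bilRR[OF rR]] by metis
      then show ?thesis using neg_max_root_shift[OF g w(1) P2 2(1-3) x cox] eta_va 2(4)
        unfolding w'_def z by simp
    qed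
  qed
  then show "z \<in> Dset R \<alpha> \<eta> S0" using Dset_memberI[OF w'] by blast
qed

end

locale highest_root_data = parabolic_subsystem R \<alpha> b S0 for R :: "(complex^'n) set" and \<alpha> b S0 +
  fixes \<theta> :: "complex^'n" and n :: "'n \<Rightarrow> nat"
  assumes theta_max: "is_max_root R (range \<alpha>) \<theta>"
    and theta_coeffs: "\<theta> = (\<Sum>i\<in>UNIV. of_nat (n i) *s \<alpha> i)"
begin

lemma thetaR: "\<theta> \<in> R" using theta_max unfolding is_max_root_def by blast

lemma coef_theta: "coef i \<theta> = of_nat (n i)"
  by (subst theta_coeffs) (rule coef_comb)

lemma theta_pos: "pos \<theta>" unfolding pos_def coef_theta by simp

lemma theta_above: "\<beta> \<in> R \<Longrightarrow> pos (\<theta> - \<beta>)"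
  using theta_max unfolding is_max_root_def pos_nonneg by blast

lemma mtheta_not_simple: "- \<theta> \<noteq> \<alpha> i"
  using root_not_both[OF thetaR theta_pos] pos_alpha by (metis)

lemma minuscule_coef_01: assumes "n k = 1" shows "\<forall>\<beta>\<in>R. pos \<beta> \<longrightarrow> coef k \<beta> = 0 \<or> coef k \<beta> = 1"
proof (intro ballI impI)
  fix \<beta> assume b: "\<beta> \<in> R" "pos \<beta>"
  have "1 - coef k \<beta> \<in> \<nat>" using theta_above[OF b(1)] assms unfolding pos_def
    by (metis coef_diff coef_theta of_nat_1)
  moreover have "1 + coef k \<beta> \<in> \<nat>" using b(2) unfolding pos_def by (metis Nats_1 Nats_add)
  moreover have "coef k \<beta> \<noteq> -1" using b(2) Nats_neg_zero[of 1] unfolding pos_def by (metis Nats_1 one_neq_zero)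
  ultimately show "coef k \<beta> = 0 \<or> coef k \<beta> = 1" using Nats_one_pm by blast
qed

lemma coef_under_diagram_perm:
  assumes g: "g \<in> weyl_group R" and gp: "g (\<alpha> p) = - \<theta>"
    and gi: "\<forall>i. i \<noteq> p \<longrightarrow> g (\<alpha> i) \<in> range \<alpha> \<and> g (\<alpha> i) \<noteq> \<alpha> q"
    and b: "pos \<beta>"
  shows "coef q (g \<beta>) = - of_nat (nat_coef p \<beta>) * coef q \<theta>"
    and "nat_coef p \<beta> = 0 \<Longrightarrow> pos (g \<beta>)"
proof -
  have "\<beta> = (\<Sum>i\<in>UNIV. coef i \<beta> *s \<alpha> i)" by (rule coef_expansion)
  also have "\<dots> = (\<Sum>i\<in>UNIV. of_nat (nat_coef i \<beta>) *s \<alpha> i)" using pos_coef[OF b] by simp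
  finally have eq: "\<beta> = (\<Sum>i\<in>UNIV. of_nat (nat_coef i \<beta>) *s \<alpha> i)" .
  have "g \<beta> = g (\<Sum>i\<in>UNIV. of_nat (nat_coef i \<beta>) *s \<alpha> i)" using arg_cong[OF eq, of g] .
  also have "\<dots> = (\<Sum>i\<in>UNIV. of_nat (nat_coef i \<beta>) *s g (\<alpha> i))" by (simp add: weyl_sum[OF g] weyl_scale[OF g])
  finally have e: "g \<beta> = (\<Sum>i\<in>UNIV. of_nat (nat_coef i \<beta>) *s g (\<alpha> i))" .
  have "coef q (g \<beta>) = (\<Sum>i\<in>UNIV. of_nat (nat_coef i \<beta>) * coef q (g (\<alpha> i)))"
    unfolding e by (simp add: coef_sum coef_scale)
  also have "\<dots> = (\<Sum>i\<in>UNIV. if i = p then - of_nat (nat_coef p \<beta>) * coef q \<theta> else 0)"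
  proof (rule sum.cong)
    fix i show "of_nat (nat_coef i \<beta>) * coef q (g (\<alpha> i)) = (if i = p then - of_nat (nat_coef p \<beta>) * coef q \<theta> else 0)"
    proof (cases "i = p")
      case True then show ?thesis using gp by (simp add: coef_minus)
    next
      case False
      then obtain m where m: "g (\<alpha> i) = \<alpha> m" "m \<noteq> q" using gi by blast
      then show ?thesis using False by (simp add: coef_alpha)
    qed
  qed simp
  finally show "coef q (g \<beta>) = - of_nat (nat_coef p \<beta>) * coef q \<theta>" by simp
  assume np: "nat_coef p \<beta> = 0"
  have "pos (of_nat (nat_coef i \<beta>) *s g (\<alpha> i))" for i
  proof (cases "i = p")
    case True then show ?thesis using np pos_zero by simp
  next
    case False
    then obtain m where "g (\<alpha> i) = \<alpha> m" using gi by blast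
    then show ?thesis using pos_scale_nat[OF pos_alpha] by simp
  qed
  then show "pos (g \<beta>)" unfolding e by (intro pos_sum)
qed

lemma diagram_automorphism:
  assumes ns: "n s = 1" and U: "U \<in> weyl_group R"
    and UT: "U ` insert (- \<theta>) (range \<alpha>) = insert (- \<theta>) (range \<alpha>)"
    and Us: "U (\<alpha> s) = - \<theta>"
  obtains k where "n k = 1" "inv U (\<alpha> k) = - \<theta>"
    "\<forall>i. i \<noteq> s \<longrightarrow> U (\<alpha> i) \<in> range \<alpha> \<and> U (\<alpha> i) \<noteq> \<alpha> k"
    "\<forall>i. i \<noteq> k \<longrightarrow> inv U (\<alpha> i) \<in> range \<alpha> \<and> inv U (\<alpha> i) \<noteq> \<alpha> s"
proof -
  define T where "T = insert (- \<theta>) (range \<alpha>)"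
  have injU: "inj U" using weyl_bij[OF nondegR U] bij_is_inj by blast
  have UTT: "U ` T = T" using UT unfolding T_def .
  have "U (- \<theta>) \<in> T" using UTT unfolding T_def by blast
  moreover have "U (- \<theta>) \<noteq> - \<theta>"
    using injU mtheta_not_simple Us by (metis injD)
  ultimately obtain k where k: "U (- \<theta>) = \<alpha> k" unfolding T_def by blast
  have U_other: "U (\<alpha> i) \<in> range \<alpha> \<and> U (\<alpha> i) \<noteq> \<alpha> k" if "i \<noteq> s" for i
  proof -
    have "U (\<alpha> i) \<in> T" using UTT unfolding T_def by blast
    moreover have "U (\<alpha> i) \<noteq> - \<theta>" using Us injU inj_alpha that by (metis injD)
    moreover have "U (\<alpha> i) \<noteq> \<alpha> k" using k injU mtheta_not_simple by (metis injD)
    ultimately show ?thesis unfolding T_def by blast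
  qed
  have invk: "inv U (\<alpha> k) = - \<theta>" using k weyl_inv_l[OF nondegR U] by metis
  have inv_other: "inv U (\<alpha> i) \<in> range \<alpha> \<and> inv U (\<alpha> i) \<noteq> \<alpha> s" if "i \<noteq> k" for i
  proof -
    have "\<alpha> i \<in> U ` T" using UTT unfolding T_def by blast
    then obtain y where y: "y \<in> T" "\<alpha> i = U y" by blast
    have iy: "inv U (\<alpha> i) = y" using y weyl_inv_l[OF nondegR U] by metis
    have "y \<noteq> - \<theta>" using y k that inj_alpha by (metis injD)
    moreover have "y \<noteq> \<alpha> s" using y Us mtheta_not_simple by metis
    ultimately show ?thesis using iy y(1) unfolding T_def by blast
  qed
  have "n k = 1"
  proof -
    have "coef k (U \<theta>) = - of_nat (nat_coef s \<theta>) * coef k \<theta>"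
      using coef_under_diagram_perm(1)[OF U Us _ theta_pos] U_other by blast
    moreover have "nat_coef s \<theta> = 1" using pos_coef[OF theta_pos, of s] coef_theta[of s] ns by simp
    moreover have "U \<theta> = - \<alpha> k" using k weyl_minus[OF U, of \<theta>] by (metis minus_minus)
    ultimately have "(- 1 :: complex) = - of_nat (n k)" by (simp add: coef_minus coef_alpha coef_theta)
    then show ?thesis by (metis minus_equation_iff of_nat_1 of_nat_eq_iff)
  qed
  then show ?thesis using that invk U_other inv_other by blast
qed

lemma diagram_shift_preserves_D:
  assumes g: "g \<in> weyl_group R" and gp: "g (\<alpha> p) = - \<theta>" and np: "n p = 1" and nq: "n q = 1"
    and gi: "\<forall>i. i \<noteq> p \<longrightarrow> g (\<alpha> i) \<in> range \<alpha> \<and> g (\<alpha> i) \<noteq> \<alpha> q"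
    and t: "\<forall>\<beta>\<in>R. pos \<beta> \<longrightarrow> bil (g \<beta>) t = coef q (g \<beta>)"
    and eta_inv: "\<forall>w\<in>weyl_group R. \<forall>\<beta>\<in>R. \<eta> (w \<beta>) = \<eta> \<beta>"
    and cox: "coxeter_condition R S0 \<eta> hbar"
  shows "(\<lambda>y. g y + hbar *s t) ` Dset R \<alpha> \<eta> S0 \<subseteq> Dset R \<alpha> \<eta> S0"
proof (rule affine_map_preserves_D[OF g minuscule_coef_01[OF np] _ _ eta_inv cox])
  note perm = coef_under_diagram_perm[OF g gp gi]
  show "\<forall>\<beta>\<in>R. pos \<beta> \<longrightarrow> coef p \<beta> = 0 \<longrightarrow> pos (g \<beta>) \<and> bil (g \<beta>) t = 0"
  proof (intro ballI impI)
    fix \<beta> assume b: "\<beta> \<in> R" "pos \<beta>" "coef p \<beta> = 0"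
    have "nat_coef p \<beta> = 0" using pos_coef[OF b(2), of p] b(3) by simp
    then show "pos (g \<beta>) \<and> bil (g \<beta>) t = 0" using perm[OF b(2)] t b by simp
  qed
  show "\<forall>\<beta>\<in>R. pos \<beta> \<longrightarrow> coef p \<beta> = 1 \<longrightarrow> pos (- g \<beta>) \<and> bil (g \<beta>) t = -1"
  proof (intro ballI impI)
    fix \<beta> assume b: "\<beta> \<in> R" "pos \<beta>" "coef p \<beta> = 1"
    have "nat_coef p \<beta> = 1" using pos_coef[OF b(2), of p] b(3) by (metis of_nat_eq_1_iff)
    then have c: "coef q (g \<beta>) = -1" using perm(1)[OF b(2)] coef_theta[of q] nq by simp
    then have "pos (- g \<beta>)" using neg_of_coef[OF weylR[OF g b(1)], of q] by simp
    then show "pos (- g \<beta>) \<and> bil (g \<beta>) t = -1" using c t b by simp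
  qed
qed

text \<open>The affine map pi_s (n_s = 1) preserves D: apply diagram_shift_preserves_D to pi_s
  itself and to its inverse.\<close>
lemma pi_preserves_D:
  assumes ns: "n s = 1" and U: "U \<in> weyl_group R"
    and UT: "U ` insert (- \<theta>) (range \<alpha>) = insert (- \<theta>) (range \<alpha>)"
    and Us: "U (\<alpha> s) = - \<theta>"
    and eta_inv: "\<forall>w\<in>weyl_group R. \<forall>\<beta>\<in>R. \<eta> (w \<beta>) = \<eta> \<beta>"
    and cox: "coxeter_condition R S0 \<eta> hbar"
  shows "(\<lambda>x. inv U x + hbar *s b s) ` Dset R \<alpha> \<eta> S0 = Dset R \<alpha> \<eta> S0"
proof -
  obtain k where k: "n k = 1" "inv U (\<alpha> k) = - \<theta>"
    "\<forall>i. i \<noteq> s \<longrightarrow> U (\<alpha> i) \<in> range \<alpha> \<and> U (\<alpha> i) \<noteq> \<alpha> k"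
    "\<forall>i. i \<noteq> k \<longrightarrow> inv U (\<alpha> i) \<in> range \<alpha> \<and> inv U (\<alpha> i) \<noteq> \<alpha> s"
    using diagram_automorphism[OF ns U UT Us] by blast
  have Ui: "inv U \<in> weyl_group R" using weyl_inv_in[OF nondegR U] .
  have fw: "(\<lambda>x. inv U x + hbar *s b s) ` Dset R \<alpha> \<eta> S0 \<subseteq> Dset R \<alpha> \<eta> S0"
    by (rule diagram_shift_preserves_D[OF Ui k(2,1) ns k(4) _ eta_inv cox]) (simp add: coef_def)
  have "bil (U \<beta>) (- U (b s)) = coef k (U \<beta>)" if b: "pos \<beta>" for \<beta>
    using coef_under_diagram_perm(1)[OF U Us k(3) b] coef_theta[of k] k(1) pos_coef[OF b, of s]
    unfolding coef_def[of s] by (simp add: bil_minus_right weyl_bil[OF U nondegR])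
  then have bw: "(\<lambda>x. U x + hbar *s (- U (b s))) ` Dset R \<alpha> \<eta> S0 \<subseteq> Dset R \<alpha> \<eta> S0"
    using diagram_shift_preserves_D[OF U Us ns k(1) k(3) _ eta_inv cox] by blast
  have inverse: "inv U (U y + hbar *s (- U (b s))) + hbar *s b s = y" for y
    by (simp add: weyl_add[OF Ui] weyl_diff[OF Ui] weyl_scale[OF Ui] weyl_minus[OF Ui]
        weyl_inv_l[OF nondegR U])
  have "Dset R \<alpha> \<eta> S0 \<subseteq> (\<lambda>x. inv U x + hbar *s b s) ` Dset R \<alpha> \<eta> S0"
  proof
    fix y assume "y \<in> Dset R \<alpha> \<eta> S0"
    then have "U y + hbar *s (- U (b s)) \<in> Dset R \<alpha> \<eta> S0" using bw by blast
    then show "y \<in> (\<lambda>x. inv U x + hbar *s b s) ` Dset R \<alpha> \<eta> S0"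
      using inverse[of y, symmetric] by (rule rev_image_eqI)
  qed
  with fw show ?thesis by blast
qed

end

context based_root_system begin

text \<open>The Weyl group preserves the coroot lattice, since it permutes the roots and commutes
  with taking coroots.\<close>
lemma weyl_coroot: "w \<in> weyl_group R \<Longrightarrow> \<beta> \<in> R \<Longrightarrow> w (coroot \<beta>) = coroot (w \<beta>)"
  unfolding coroot_def using weyl_scale weyl_bil nondegR by metis

lemma weyl_imR: assumes w: "w \<in> weyl_group R" shows "w ` R = R" "inj_on w R"
proof -
  have "inj w" using weyl_bij[OF nondegR w] bij_is_inj by blast
  then show "inj_on w R" by (simp add: inj_on_def inj_def)
  then show "w ` R = R" using endo_inj_surj[OF finR] weylR[OF w] by blast
qed

lemma lattice_pres: assumes w: "w \<in> weyl_group R" and l: "l \<in> coroot_lattice R"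
  shows "w l \<in> coroot_lattice R"
proof -
  obtain kf where l: "l = (\<Sum>\<beta>\<in>R. of_int (kf \<beta>) *s coroot \<beta>)" using l unfolding coroot_lattice_def by blast
  have "w l = (\<Sum>\<beta>\<in>R. of_int (kf \<beta>) *s coroot (w \<beta>))"
    unfolding l by (simp add: weyl_sum[OF w] weyl_scale[OF w] weyl_coroot[OF w])
  also have "\<dots> = (\<Sum>\<beta>\<in>R. of_int (kf (inv w (w \<beta>))) *s coroot (w \<beta>))"
    using weyl_inv_l[OF nondegR w] by simp
  also have "\<dots> = (\<Sum>\<gamma>\<in>w ` R. of_int (kf (inv w \<gamma>)) *s coroot \<gamma>)"
    using sum.reindex[OF weyl_imR(2)[OF w], of "\<lambda>\<gamma>. of_int (kf (inv w \<gamma>)) *s coroot \<gamma>"] by simp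
  also have "\<dots> = (\<Sum>\<gamma>\<in>R. of_int (kf (inv w \<gamma>)) *s coroot \<gamma>)" using weyl_imR(1)[OF w] by simp
  finally show ?thesis unfolding coroot_lattice_def by (auto intro!: exI[of _ "\<lambda>\<gamma>. kf (inv w \<gamma>)"])
qed

lemma Fspace_affine: assumes w: "w \<in> weyl_group R" and f: "f \<in> Fspace R"
  shows "(\<lambda>x. f (w x + c)) \<in> Fspace R"
proof -
  have sm: "smooth_fun (\<lambda>x. f (w x + c))" using smooth_affine[OF weyl_bounded_linear[OF w]] f
    unfolding Fspace_def by blast
  have "f (w (x + (2 * of_real pi * \<i>) *s l) + c) = f (w x + c)" if l: "l \<in> coroot_lattice R" for x l
  proof -
    have e: "w (x + (2 * of_real pi * \<i>) *s l) + c = (w x + c) + (2 * of_real pi * \<i>) *s w l"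
      by (simp add: weyl_add[OF w] weyl_scale[OF w] algebra_simps)
    have "f ((w x + c) + (2 * of_real pi * \<i>) *s w l) = f (w x + c)"
      using f lattice_pres[OF w l] unfolding Fspace_def by blast
    then show ?thesis unfolding e .
  qed
  then show ?thesis using sm unfolding Fspace_def by blast
qed

lemma inv_affine_weyl: assumes U: "U \<in> weyl_group R"
  shows "inv (\<lambda>x. inv U x + c) = (\<lambda>y. U (y - c))"
proof (rule inv_unique_comp)
  show "(\<lambda>x. inv U x + c) \<circ> (\<lambda>y. U (y - c)) = id"
    using weyl_inv_l[OF nondegR U] by (simp add: fun_eq_iff)
  show "(\<lambda>y. U (y - c)) \<circ> (\<lambda>x. inv U x + c) = id"
    using weyl_inv_r[OF nondegR U] by (simp add: fun_eq_iff)
qed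

lemma ideal_D_affine_image:
  assumes U: "U \<in> weyl_group R" and D: "(\<lambda>x. inv U x + c) ` D = D"
  shows "(\<lambda>f. f \<circ> inv (\<lambda>x. inv U x + c)) ` ideal_D R D = ideal_D R D"
proof
  have Ui: "inv U \<in> weyl_group R" using weyl_inv_in[OF nondegR U] .
  have preimage_D: "U (y - c) \<in> D" if "y \<in> D" for y
  proof -
    have "y \<in> (\<lambda>x. inv U x + c) ` D" using that by (simp add: D)
    then obtain x where "x \<in> D" "y = inv U x + c" by blast
    then show ?thesis using weyl_inv_r[OF nondegR U] by simp
  qed
  have shift: "U (y - c) = U y + - U c" for y by (simp add: weyl_diff[OF U])
  show "(\<lambda>f. f \<circ> inv (\<lambda>x. inv U x + c)) ` ideal_D R D \<subseteq> ideal_D R D"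
  proof
    fix g assume "g \<in> (\<lambda>f. f \<circ> inv (\<lambda>x. inv U x + c)) ` ideal_D R D"
    then obtain f where f: "f \<in> Fspace R" "\<forall>x\<in>D. f x = 0" and g: "g = (\<lambda>y. f (U (y - c)))"
      unfolding ideal_D_def inv_affine_weyl[OF U] by (auto simp: comp_def)
    have "g \<in> Fspace R" unfolding g shift using Fspace_affine[OF U f(1)] .
    then show "g \<in> ideal_D R D" using f(2) preimage_D unfolding g ideal_D_def by blast
  qed
  show "ideal_D R D \<subseteq> (\<lambda>f. f \<circ> inv (\<lambda>x. inv U x + c)) ` ideal_D R D"
  proof
    fix g assume g: "g \<in> ideal_D R D"
    define f where "f = (\<lambda>x. g (inv U x + c))"
    have "f \<in> Fspace R" unfolding f_def using Fspace_affine[OF Ui] g unfolding ideal_D_def by blast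
    then have "f \<in> ideal_D R D" using g D unfolding f_def ideal_D_def by blast
    moreover have "g = f \<circ> inv (\<lambda>x. inv U x + c)"
      unfolding f_def inv_affine_weyl[OF U] using weyl_inv_l[OF nondegR U] by (simp add: comp_def)
    ultimately show "g \<in> (\<lambda>f. f \<circ> inv (\<lambda>x. inv U x + c)) ` ideal_D R D" by blast
  qed
qed

end

theorem mainTheorem6:
  fixes R :: "(complex^'n) set"
    and \<alpha> :: "'n \<Rightarrow> complex^'n"
    and \<theta> :: "complex^'n"
    and n :: "'n \<Rightarrow> nat"
    and b :: "'n \<Rightarrow> complex^'n"
    and u :: "'n \<Rightarrow> (complex^'n \<Rightarrow> complex^'n)"
    and hbar :: complex
    and \<eta> :: "complex^'n \<Rightarrow> complex"
    and S0 :: "(complex^'n) set"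
  assumes rs: "root_system R" and red: "reduced_rs R" and irr: "irreducible_rs R"
    and base: "is_base R \<alpha>"
    and theta_max: "is_max_root R (range \<alpha>) \<theta>"
    and theta_coeffs: "\<theta> = (\<Sum>i\<in>UNIV. of_nat (n i) *s \<alpha> i)"
    and coweights: "\<forall>i j. bil (\<alpha> i) (b j) = (if i = j then 1 else 0)"
    and u_def: "\<forall>r. n r = 1 \<longrightarrow> u r \<in> weyl_group R
                  \<and> u r ` insert (- \<theta>) (range \<alpha>) = insert (- \<theta>) (range \<alpha>)
                  \<and> u r (\<alpha> r) = - \<theta>"
    and hbar_nz: "hbar \<noteq> 0"
    and hbar_irr: "\<forall>q::rat. hbar \<noteq> of_real pi * \<i> * of_rat q"
    and eta_inv: "\<forall>w\<in>weyl_group R. \<forall>\<beta>\<in>R. \<eta> (w \<beta>) = \<eta> \<beta>"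
    and S0_sub: "S0 \<subseteq> range \<alpha>"
    and coxeter: "coxeter_condition R S0 \<eta> hbar"
  shows "\<forall>r\<in>minusc_set n.
           pi_map u b hbar r ` Dset R \<alpha> \<eta> S0 = Dset R \<alpha> \<eta> S0
         \<and> pi_fun u b hbar r ` ideal_D R (Dset R \<alpha> \<eta> S0) = ideal_D R (Dset R \<alpha> \<eta> S0)"
proof
  interpret highest_root_data R \<alpha> b S0 \<theta> n
    by unfold_locales (use rs red base coweights S0_sub theta_max theta_coeffs in auto)
  fix r assume "r \<in> minusc_set n"
  then consider "r = None" | s where "r = Some s" "n s = 1" unfolding minusc_set_def by blast
  then show "pi_map u b hbar r ` Dset R \<alpha> \<eta> S0 = Dset R \<alpha> \<eta> S0
         \<and> pi_fun u b hbar r ` ideal_D R (Dset R \<alpha> \<eta> S0) = ideal_D R (Dset R \<alpha> \<eta> S0)"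
  proof cases
    case 1
    then show ?thesis by (simp add: pi_map_def pi_fun_def)
  next
    case 2
    have U: "u s \<in> weyl_group R" "u s ` insert (- \<theta>) (range \<alpha>) = insert (- \<theta>) (range \<alpha>)"
      "u s (\<alpha> s) = - \<theta>" using u_def 2(2) by blast+
    have pi: "pi_map u b hbar r = (\<lambda>x. inv (u s) x + hbar *s b s)"
      unfolding pi_map_def 2(1) by simp
    have D: "pi_map u b hbar r ` Dset R \<alpha> \<eta> S0 = Dset R \<alpha> \<eta> S0"
      unfolding pi using pi_preserves_D[OF 2(2) U eta_inv coxeter] .
    have "pi_fun u b hbar r = (\<lambda>f. f \<circ> inv (pi_map u b hbar r))" by (simp add: fun_eq_iff pi_fun_def)
    then show ?thesis using D ideal_D_affine_image[OF U(1)] unfolding pi by simp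
  qed
qed

end
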